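(* In the minimal setting described in the context, one has: (a) $2\gamma'(x)=1-h^\vee-\tfrac12\epsilon(\sigma)$; (b) $\gamma'=2\gamma_{1/2}+\gamma'_0-\tfrac12(h^\vee-1)\theta$ in $(\mathfrak h^\sigma)^*$ (with $\theta$ restricted to $\mathfrak h^\sigma$); (c) $\gamma_{1/2}^\natural=\tfrac12(\gamma'^\natural-\gamma_0'^\natural)$, where $\lambda\mapsto\lambda^\natural$ denotes restriction from $\mathfrak h^\sigma$ to $\mathfrak h^\natural=\{h\in\mathfrak h^\sigma:[h,f]=0\}$.
   Context: Let $\mathfrak g$ be a simple finite-dimensional Lie superalgebra over $\mathbb C$ with a non-degenerate even supersymmetric invariant bilinear form $(\cdot|\cdot)$, let $\theta$ be the highest root of a simple component of $\mathfrak g_{\bar0}$, normalize $(\theta|\theta)=2$, and let $\{e,x,f\}$ be an $\mathfrak{sl}_2$-triple ($[x,e]=e$, $[x,f]=-f$, $[e,f]=x$) with $e,f$ root vectors for $\pm\theta$ and $x=\theta/2$ (via the form), such that $\mathrm{ad}\,x$ gives the minimal grading $\mathfrak g=\mathbb Cf\oplus\mathfrak g_{-1/2}\oplus\mathfrak g_0\oplus\mathfrak g_{1/2}\oplus\mathbb Ce$. Let $h^\vee$ be the dual Coxeter number of $\mathfrak g$ with respect to $(\cdot|\cdot)$ (so that $\mathrm{sdim}\,\mathfrak g_{1/2}=2h^\vee-4$). Let $\sigma$ be an automorphism of $\mathfrak g$ with $\sigma(x)=x$, $\sigma(f)=f$, preserving $(\cdot|\cdot)$, diagonalizable with eigenvalues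 of modulus 1; $\mathfrak g^{\bar\mu}=\{a:\sigma a=e^{2\pi i\bar\mu}a\}$ for $\bar\mu\in\mathbb R/\mathbb Z$. Let $\mathfrak g_j(\sigma)=\{a\in\mathfrak g_j:\sigma a=(-1)^{2j}a\}$, $\mathfrak g(\sigma)=\bigoplus_j\mathfrak g_j(\sigma)$. Fix a $\sigma$-invariant Cartan subalgebra $\mathfrak h$ of the even part of $\mathfrak g_0$ and a decomposition $\mathfrak g(\sigma)=\mathfrak n(\sigma)_-\oplus\mathfrak h^\sigma\oplus\mathfrak n(\sigma)_+$ into graded subspaces, compatible with the $\frac12\mathbb Z$-grading, such that (i) $\mathfrak n(\sigma)_\pm$ are nilpotent subalgebras, isotropic for $(\cdot|\cdot)$, normalized by $\mathfrak h^\sigma$; (ii) $f\in\mathfrak n(\sigma)_+$; (iii) $\mathfrak n_{1/2}(\sigma)_+:=\mathfrak n(\sigma)_+\cap\mathfrak g_{1/2}$ is maximal isotropic in $\mathfrak g_{1/2}(\sigma)$ for $\langle a,b\rangle_{ne}=(f|[a,b])$; (iv) $\mathfrak n_{1/2}(\sigma)_-=\mathfrak n'\oplus\mathfrak g_{1/2}(\sigma)_0$ with $\mathfrak n'$ maximal isotropic for $\langle\cdot,\cdot\rangle_{ne}$ and $\mathfrak g_{1/2}(\sigma)_0$ of dimension $\epsilon(\sigma)\le1$, normalized by $\mathfrak h^\sigma$. Choose a homogeneous basis $\{u_i\}_{i\in S}$ of $\mathfrak g$ compatible with the grading, the $\sigma$-eigenspaces, the $\mathrm{ad}\,\mathfrak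 h^\sigma$-weight decomposition, containing a basis of $\mathfrak h^\sigma$, with each basis vector lying in $\mathfrak g(\sigma)$ belonging to one of $\mathfrak n(\sigma)_+$, $\mathfrak h^\sigma$, $\mathfrak n(\sigma)_-$, and each basis vector of $\mathfrak g_{1/2}(\sigma)$ lying in one of $\mathfrak n_{1/2}(\sigma)_+$, $\mathfrak g_{1/2}(\sigma)_0$, $\mathfrak n'$. Let $S'$ index the basis vectors not in $\mathfrak h^\sigma$, and $S_j=\{i\in S': u_i\in\mathfrak g_j\}$. For $i\in S'$ with $u_i\in\mathfrak g_{m_i}\cap\mathfrak g^{\bar\mu_i}$, let $\alpha_i\in(\mathfrak h^\sigma)^*$ be its weight, $\tilde p(i)=(-1)^{p(u_i)}$, and $s_i=-m_i$ if $u_i\in\mathfrak n(\sigma)_+$, $s_i=\min\{n\in\bar\mu_i:n>-m_i\}$ otherwise. Define $\gamma'=\frac12\sum_{i\in S'}\tilde p(i)s_i\alpha_i$, $\gamma'_0=\frac12\sum_{i\in S_0}\tilde p(i)s_i\alpha_i$, $\gamma_{1/2}=\frac12\sum_{i\in S_{1/2}}\tilde p(i)s_i\alpha_i$. *)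

theory Defs
  imports Complex_Main
begin

text \<open>A finite-dimensional complex Lie superalgebra is given in coordinates with respect
  to a fixed homogeneous basis indexed by a finite type 'i: vectors are functions
  'i => complex, the basis vector u_i is ub i, parities are p i (True = odd),
  the bracket is given by structure constants c i j k, the bilinear form by its
  Gram matrix B i j = (u_i | u_j).\<close>

type_synonym 'i vec = "'i \<Rightarrow> complex"

definition vzero :: "'i vec" where "vzero = (\<lambda>_. 0)"
definition vadd :: "'i vec \<Rightarrow> 'i vec \<Rightarrow> 'i vec" where "vadd a b = (\<lambda>k. a k + b k)"
definition vsc :: "complex \<Rightarrow> 'i vec \<Rightarrow> 'i vec" where "vsc t a = (\<lambda>k. t * a k)"
definition ub :: "'i \<Rightarrow> 'i vec" where "ub i = (\<lambda>k. if k = i then 1 else 0)"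
definition supp_on :: "'i set \<Rightarrow> 'i vec set" where
  "supp_on A = {a. \<forall>k. k \<notin> A \<longrightarrow> a k = 0}"
definition psign :: "bool \<Rightarrow> complex" where "psign b = (if b then -1 else 1)"

definition brk :: "('i::finite \<Rightarrow> 'i \<Rightarrow> 'i \<Rightarrow> complex) \<Rightarrow> 'i vec \<Rightarrow> 'i vec \<Rightarrow> 'i vec" where
  "brk c a b = (\<lambda>k. \<Sum>i\<in>UNIV. \<Sum>j\<in>UNIV. a i * b j * c i j k)"

definition frm :: "('i::finite \<Rightarrow> 'i \<Rightarrow> complex) \<Rightarrow> 'i vec \<Rightarrow> 'i vec \<Rightarrow> complex" where
  "frm B a b = (\<Sum>i\<in>UNIV. \<Sum>j\<in>UNIV. a i * b j * B i j)"

definition subspace :: "'i vec set \<Rightarrow> bool" where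
  "subspace V \<longleftrightarrow> vzero \<in> V \<and> (\<forall>a\<in>V. \<forall>b\<in>V. vadd a b \<in> V) \<and> (\<forall>t a. a \<in> V \<longrightarrow> vsc t a \<in> V)"

definition even_part :: "('i \<Rightarrow> bool) \<Rightarrow> 'i vec \<Rightarrow> 'i vec" where
  "even_part p a = (\<lambda>k. if p k then 0 else a k)"
definition odd_part :: "('i \<Rightarrow> bool) \<Rightarrow> 'i vec \<Rightarrow> 'i vec" where
  "odd_part p a = (\<lambda>k. if p k then a k else 0)"

definition lie_superalgebra :: "('i::finite \<Rightarrow> bool) \<Rightarrow> ('i \<Rightarrow> 'i \<Rightarrow> 'i \<Rightarrow> complex) \<Rightarrow> bool" where
  "lie_superalgebra p c \<longleftrightarrow>
     (\<forall>i j k. c i j k \<noteq> 0 \<longrightarrow> p k = (p i \<noteq> p j)) \<and>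
     (\<forall>i j k. c i j k = - psign (p i \<and> p j) * c j i k) \<and>
     (\<forall>i j l. brk c (ub i) (brk c (ub j) (ub l)) =
        vadd (brk c (brk c (ub i) (ub j)) (ub l))
             (vsc (psign (p i \<and> p j)) (brk c (ub j) (brk c (ub i) (ub l)))))"

definition graded_ideal :: "('i::finite \<Rightarrow> bool) \<Rightarrow> ('i \<Rightarrow> 'i \<Rightarrow> 'i \<Rightarrow> complex) \<Rightarrow> 'i vec set \<Rightarrow> bool" where
  "graded_ideal p c I \<longleftrightarrow> subspace I \<and> (\<forall>a\<in>I. even_part p a \<in> I \<and> odd_part p a \<in> I) \<and>
     (\<forall>a b. b \<in> I \<longrightarrow> brk c a b \<in> I)"

definition simple_lie_superalgebra :: "('i::finite \<Rightarrow> bool) \<Rightarrow> ('i \<Rightarrow> 'i \<Rightarrow> 'i \<Rightarrow> complex) \<Rightarrow> bool" where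
  "simple_lie_superalgebra p c \<longleftrightarrow> lie_superalgebra p c \<and> (\<exists>a b. brk c a b \<noteq> vzero) \<and>
     (\<forall>I. graded_ideal p c I \<longrightarrow> I = {vzero} \<or> I = UNIV)"

definition good_form :: "('i::finite \<Rightarrow> bool) \<Rightarrow> ('i \<Rightarrow> 'i \<Rightarrow> 'i \<Rightarrow> complex) \<Rightarrow> ('i \<Rightarrow> 'i \<Rightarrow> complex) \<Rightarrow> bool" where
  "good_form p c B \<longleftrightarrow>
     (\<forall>a. (\<forall>b. frm B a b = 0) \<longrightarrow> a = vzero) \<and>
     (\<forall>i j. B i j \<noteq> 0 \<longrightarrow> p i = p j) \<and>
     (\<forall>i j. B i j = psign (p i \<and> p j) * B j i) \<and>
     (\<forall>a b d. frm B (brk c a b) d = frm B a (brk c b d))"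

text \<open>Dual basis u^i = sum_k D i k u_k with (u^i | u_j) = delta_ij; Casimir operator
  Omega(a) = sum_i [u_i,[u^i,a]]; the dual Coxeter number hv is defined by Omega = 2 hv on g.\<close>
definition dual_basis :: "('i::finite \<Rightarrow> 'i \<Rightarrow> complex) \<Rightarrow> ('i \<Rightarrow> 'i \<Rightarrow> complex) \<Rightarrow> bool" where
  "dual_basis B D \<longleftrightarrow> (\<forall>i j. frm B (\<lambda>l. D i l) (ub j) = (if i = j then 1 else 0))"

definition casimir :: "('i::finite \<Rightarrow> 'i \<Rightarrow> 'i \<Rightarrow> complex) \<Rightarrow> ('i \<Rightarrow> 'i \<Rightarrow> complex) \<Rightarrow> 'i vec \<Rightarrow> 'i vec" where
  "casimir c D a = (\<lambda>l. \<Sum>i\<in>UNIV. \<Sum>k\<in>UNIV. D i k * brk c (ub i) (brk c (ub k) a) l)"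

definition dual_coxeter :: "('i::finite \<Rightarrow> 'i \<Rightarrow> 'i \<Rightarrow> complex) \<Rightarrow> ('i \<Rightarrow> 'i \<Rightarrow> complex) \<Rightarrow> complex \<Rightarrow> bool" where
  "dual_coxeter c B hv \<longleftrightarrow> (\<exists>D. dual_basis B D \<and> (\<forall>a. casimir c D a = vsc (2 * hv) a))"

definition subalg :: "('i::finite \<Rightarrow> 'i \<Rightarrow> 'i \<Rightarrow> complex) \<Rightarrow> 'i vec set \<Rightarrow> bool" where
  "subalg c A \<longleftrightarrow> subspace A \<and> (\<forall>a\<in>A. \<forall>b\<in>A. brk c a b \<in> A)"

definition nilpotent_sub :: "('i::finite \<Rightarrow> 'i \<Rightarrow> 'i \<Rightarrow> complex) \<Rightarrow> 'i vec set \<Rightarrow> bool" where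
  "nilpotent_sub c A \<longleftrightarrow> (\<exists>n. \<forall>as b. set as \<subseteq> A \<and> length as = n \<and> b \<in> A \<longrightarrow> foldr (brk c) as b = vzero)"

definition cartan_sub :: "('i::finite \<Rightarrow> 'i \<Rightarrow> 'i \<Rightarrow> complex) \<Rightarrow> 'i vec set \<Rightarrow> 'i vec set \<Rightarrow> bool" where
  "cartan_sub c L h \<longleftrightarrow> subalg c h \<and> h \<subseteq> L \<and> nilpotent_sub c h \<and>
     {a \<in> L. \<forall>b\<in>h. brk c a b \<in> h} = h"

definition max_isotropic :: "('i vec \<Rightarrow> 'i vec \<Rightarrow> complex) \<Rightarrow> 'i vec set \<Rightarrow> 'i vec set \<Rightarrow> bool" where
  "max_isotropic \<beta> V W \<longleftrightarrow> subspace W \<and> W \<subseteq> V \<and> (\<forall>a\<in>W. \<forall>b\<in>W. \<beta> a b = 0) \<and>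
     (\<forall>W'. subspace W' \<and> W \<subseteq> W' \<and> W' \<subseteq> V \<and> (\<forall>a\<in>W'. \<forall>b\<in>W'. \<beta> a b = 0) \<longrightarrow> W' = W)"

definition sig :: "('i \<Rightarrow> real) \<Rightarrow> 'i vec \<Rightarrow> 'i vec" where
  "sig mu a = (\<lambda>k. cis (2 * pi * mu k) * a k)"

text \<open>Weight of u_i evaluated at h (meaningful when u_i is an ad h-eigenvector).\<close>
definition wt :: "('i::finite \<Rightarrow> 'i \<Rightarrow> 'i \<Rightarrow> complex) \<Rightarrow> 'i \<Rightarrow> 'i vec \<Rightarrow> complex" where
  "wt c i h = brk c h (ub i) i"

definition sval :: "'i set \<Rightarrow> ('i \<Rightarrow> real) \<Rightarrow> ('i \<Rightarrow> real) \<Rightarrow> 'i \<Rightarrow> real" where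
  "sval Np m mu i = (if i \<in> Np then - m i
     else (LEAST n::real. (\<exists>k::int. n = mu i + of_int k) \<and> n > - m i))"

definition gam :: "('i::finite \<Rightarrow> 'i \<Rightarrow> 'i \<Rightarrow> complex) \<Rightarrow> ('i \<Rightarrow> bool) \<Rightarrow> 'i set \<Rightarrow> ('i \<Rightarrow> real) \<Rightarrow> ('i \<Rightarrow> real)
     \<Rightarrow> 'i set \<Rightarrow> 'i vec \<Rightarrow> complex" where
  "gam c p Np m mu A h = (1/2) * (\<Sum>i\<in>A. psign (p i) * of_real (sval Np m mu i) * wt c i h)"

end

theory Submission
  imports Defs
begin

text \<open>
  Write gamma'(h) = 1/2 sum_i (-1)^p(i) s_i alpha_i(h) and sort the basis by degree. The root
  vectors e and f contribute 0 and -theta(h), and degree 0 gives gamma'_0. The terms of degree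
  -1/2 are matched with those of degree 1/2 by three pairings: outside g(sigma), ad f identifies
  g_1/2 with g_-1/2, shifting weights by -theta and s_i by 1, and the form <a, b>_ne = (f | [a, b])
  pairs each u_i with basis vectors of conjugate sigma-eigenvalue, for which s_j = -s_i and
  the weights add up to theta; inside g(sigma), the invariant form pairs n(sigma)_+ with
  n(sigma)_- and negates weights. Together with h^vee = sum_i (-1)^p(i) m_i^2 = 2 + sdim g_1/2 / 2,
  read off from the Casimir operator at x, this gives (b), and (c) is (b) at theta(h) = 0.
  At h = x all weights are degrees, so (a) reduces to the superdimensions of the degree 1/2
  parts of n(sigma)_+ and n(sigma)_-. Both are maximal isotropic for <a, b>_ne in g_1/2(sigma),
  which is symplectic on the even part and orthogonal on the odd part; comparing them shows
  that they differ exactly by the odd complement g_1/2(sigma)_0.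
\<close>

section \<open>Coordinates\<close>

lemmas ub_simps = ub_def if_distrib [of "\<lambda>t. t * _"] if_distrib [of "\<lambda>t. _ * t"]

lemma sum_ub_left [simp]: "(\<Sum>i\<in>UNIV. ub j i * g i) = (g j :: complex)"
  for g :: "'i::finite \<Rightarrow> complex"
  by (simp add: ub_simps cong: if_cong)

lemma sum_ub_right [simp]: "(\<Sum>i\<in>UNIV. g i * ub j i) = (g j :: complex)"
  for g :: "'i::finite \<Rightarrow> complex"
  by (simp add: ub_simps cong: if_cong)

lemma brk_ub_ub: "brk c (ub i) (ub j) = (\<lambda>k. c i j k)"
  unfolding brk_def by (simp add: ub_simps cong: if_cong)

lemma brk_ub_left: "brk c (ub i) b = (\<lambda>k. \<Sum>j\<in>UNIV. b j * c i j k)"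
  unfolding brk_def by (subst sum.swap) (simp add: ub_simps cong: if_cong)

lemma brk_ub_right: "brk c a (ub j) = (\<lambda>k. \<Sum>i\<in>UNIV. a i * c i j k)"
  unfolding brk_def by (simp add: ub_simps cong: if_cong)

lemma brk_ub_brk_ub:
  "brk c (ub a) (brk c (ub b) v) k = (\<Sum>l\<in>UNIV. v l * (\<Sum>n\<in>UNIV. c b l n * c a n k))"
  unfolding brk_ub_left by (simp add: sum_distrib_left sum_distrib_right mult_ac) (rule sum.swap)

lemma frm_ub_ub: "frm B (ub i) (ub j) = B i j"
  unfolding frm_def by (simp add: ub_simps cong: if_cong)

lemma frm_ub_right: "frm B a (ub j) = (\<Sum>i\<in>UNIV. a i * B i j)"
  unfolding frm_def by (simp add: ub_simps cong: if_cong)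

lemma frm_ub_left: "frm B (ub i) b = (\<Sum>j\<in>UNIV. b j * B i j)"
  unfolding frm_def by (subst sum.swap) (simp add: ub_simps cong: if_cong)

lemma frm_expand_right: "frm B a b = (\<Sum>j\<in>UNIV. b j * frm B a (ub j))"
  unfolding frm_ub_right unfolding frm_def
  by (simp add: sum_distrib_left mult_ac) (rule sum.swap)

lemma frm_expand_left: "frm B a b = (\<Sum>i\<in>UNIV. a i * frm B (ub i) b)"
  unfolding frm_ub_left unfolding frm_def by (simp add: sum_distrib_left mult_ac)

lemma brk_expand_right: "brk c a b k = (\<Sum>j\<in>UNIV. b j * brk c a (ub j) k)"
  unfolding brk_ub_right unfolding brk_def
  by (simp add: sum_distrib_left mult_ac) (rule sum.swap)

lemma brk_expand_left: "brk c a b k = (\<Sum>i\<in>UNIV. a i * brk c (ub i) b k)"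
  unfolding brk_ub_left unfolding brk_def by (simp add: sum_distrib_left mult_ac)

lemma frm_sum_right:
  "frm B a (\<lambda>k. \<Sum>i\<in>UNIV. g i * w i k) = (\<Sum>i\<in>UNIV. g i * frm B a (w i))"
  for B :: "'i::finite \<Rightarrow> 'i \<Rightarrow> complex"
proof -
  have "frm B a (\<lambda>k. \<Sum>i\<in>UNIV. g i * w i k) = (\<Sum>b\<in>UNIV. (\<Sum>i\<in>UNIV. g i * w i b) * frm B a (ub b))"
    by (subst frm_expand_right) simp
  also have "\<dots> = (\<Sum>i\<in>UNIV. g i * (\<Sum>b\<in>UNIV. w i b * frm B a (ub b)))"
    by (simp add: sum_distrib_left sum_distrib_right mult_ac) (rule sum.swap)
  also have "\<dots> = (\<Sum>i\<in>UNIV. g i * frm B a (w i))"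
    by (simp add: frm_expand_right[symmetric])
  finally show ?thesis .
qed

lemma frm_sum_left:
  "frm B (\<lambda>k. \<Sum>i\<in>UNIV. g i * w i k) b = (\<Sum>i\<in>UNIV. g i * frm B (w i) b)"
  for B :: "'i::finite \<Rightarrow> 'i \<Rightarrow> complex"
proof -
  have "frm B (\<lambda>k. \<Sum>i\<in>UNIV. g i * w i k) b = (\<Sum>k\<in>UNIV. (\<Sum>i\<in>UNIV. g i * w i k) * frm B (ub k) b)"
    by (subst frm_expand_left) simp
  also have "\<dots> = (\<Sum>i\<in>UNIV. g i * (\<Sum>k\<in>UNIV. w i k * frm B (ub k) b))"
    by (simp add: sum_distrib_left sum_distrib_right mult_ac) (rule sum.swap)
  also have "\<dots> = (\<Sum>i\<in>UNIV. g i * frm B (w i) b)"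
    by (simp only: frm_expand_left[symmetric])
  finally show ?thesis .
qed

lemma frm_bilinear:
  "frm B (vadd a b) d = frm B a d + frm B b d"
  "frm B (vsc t a) d = t * frm B a d"
  "frm B d (vadd a b) = frm B d a + frm B d b"
  "frm B d (vsc t a) = t * frm B d a"
  unfolding frm_def vadd_def vsc_def
  by (simp_all add: algebra_simps sum.distrib sum_distrib_left)

lemma brk_bilinear:
  "brk c (vadd a b) d = vadd (brk c a d) (brk c b d)"
  "brk c (vsc t a) d = vsc t (brk c a d)"
  "brk c d (vadd a b) = vadd (brk c d a) (brk c d b)"
  "brk c d (vsc t a) = vsc t (brk c d a)"
  unfolding brk_def vadd_def vsc_def
  by (simp_all add: algebra_simps sum.distrib sum_distrib_left)

lemma brk_vzero: "brk c vzero b = vzero" "brk c b vzero = vzero"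
  unfolding brk_def vzero_def by simp_all

lemma frm_vzero: "frm B vzero b = 0"
  unfolding frm_def vzero_def by simp

lemma frm_eq_0_if_basis:
  assumes "\<And>j. frm B a (ub j) = 0"
  shows "frm B a b = 0"
  using frm_expand_right[of B a b] assms by simp

lemma vsc_eq_vzero_iff: "vsc t a = vzero \<longleftrightarrow> t = 0 \<or> a = vzero"
  by (auto simp: vsc_def vzero_def fun_eq_iff)

lemma vsc_0_left: "vsc 0 a = vzero"
  by (simp add: vsc_def vzero_def)

lemma vsc_1_left: "vsc 1 a = a"
  by (simp add: vsc_def)

lemma vsc_vsc: "vsc s (vsc t a) = vsc (s * t) a"
  by (simp add: vsc_def fun_eq_iff)

lemma vsc_vadd: "vsc t (vadd a b) = vadd (vsc t a) (vsc t b)"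
  by (simp add: vsc_def vadd_def fun_eq_iff algebra_simps)

lemma ub_neq_vzero: "ub i \<noteq> vzero"
  by (auto simp: ub_def vzero_def fun_eq_iff)

lemma ub_in_supp_on: "i \<in> I \<Longrightarrow> ub i \<in> supp_on I"
  by (auto simp: supp_on_def ub_def)

lemma supp_on_mono: "v \<in> supp_on I \<Longrightarrow> I \<subseteq> J \<Longrightarrow> v \<in> supp_on J"
  by (auto simp: supp_on_def)

lemma supp_on_nonzero: "v \<in> supp_on I \<Longrightarrow> v k \<noteq> 0 \<Longrightarrow> k \<in> I"
  by (auto simp: supp_on_def)

lemma sum_supp_on: "v \<in> supp_on I \<Longrightarrow> (\<Sum>i\<in>UNIV. v i * g i) = (\<Sum>i\<in>I. v i * g i)"
  for v :: "'i::finite vec"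
  unfolding supp_on_def by (intro sum.mono_neutral_right) auto

lemma supp_on_eq_line:
  fixes v :: "'i::finite vec"
  assumes "supp_on S = {vsc t v |t. True}" "v \<noteq> vzero"
  shows "\<exists>j. S = {j} \<and> v = vsc (v j) (ub j) \<and> v j \<noteq> 0"
proof -
  have "v = vsc 1 v" by (simp add: vsc_def)
  then have vS: "v \<in> supp_on S" using assms(1) by auto
  obtain j where j: "v j \<noteq> 0" using assms(2) by (auto simp: vzero_def fun_eq_iff)
  have "i = j" if iS: "i \<in> S" for i
  proof (rule ccontr)
    assume "i \<noteq> j"
    obtain t where t: "ub i = vsc t v" using assms(1) ub_in_supp_on[OF iS] by blast
    have "t * v j = 0" using fun_cong[OF t, of j] \<open>i \<noteq> j\<close> by (simp add: ub_def vsc_def)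
    with j t show False by (simp add: vsc_0_left ub_neq_vzero)
  qed
  moreover have "j \<in> S" using supp_on_nonzero[OF vS j] .
  ultimately have S: "S = {j}" by blast
  have "v = vsc (v j) (ub j)"
  proof
    fix k
    show "v k = vsc (v j) (ub j) k"
      using vS S by (cases "k = j") (auto simp: supp_on_def vsc_def ub_def)
  qed
  with S j show ?thesis by blast
qed

lemma subspace_extend:
  assumes "subspace W"
  shows "subspace {vadd w (vsc t u) |w t. w \<in> W}"
  unfolding subspace_def
proof (intro conjI ballI allI impI)
  have W: "vzero \<in> W" "\<And>a b. a \<in> W \<Longrightarrow> b \<in> W \<Longrightarrow> vadd a b \<in> W" "\<And>s a. a \<in> W \<Longrightarrow> vsc s a \<in> W"
    using assms unfolding subspace_def by blast+
  have "vzero = vadd vzero (vsc 0 u)" by (simp add: vadd_def vsc_def vzero_def)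
  then show "vzero \<in> {vadd w (vsc t u) |w t. w \<in> W}" using W(1) by blast
  fix a b assume "a \<in> {vadd w (vsc t u) |w t. w \<in> W}" "b \<in> {vadd w (vsc t u) |w t. w \<in> W}"
  then obtain w1 t1 w2 t2 where "a = vadd w1 (vsc t1 u)" "w1 \<in> W" "b = vadd w2 (vsc t2 u)" "w2 \<in> W"
    by blast
  moreover have "vadd (vadd w1 (vsc t1 u)) (vadd w2 (vsc t2 u)) = vadd (vadd w1 w2) (vsc (t1 + t2) u)"
    by (simp add: vadd_def vsc_def fun_eq_iff algebra_simps)
  ultimately show "vadd a b \<in> {vadd w (vsc t u) |w t. w \<in> W}" using W(2) by blast
next
  have W: "\<And>s a. a \<in> W \<Longrightarrow> vsc s a \<in> W"
    using assms unfolding subspace_def by blast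
  fix s a assume "a \<in> {vadd w (vsc t u) |w t. w \<in> W}"
  then obtain w1 t1 where "a = vadd w1 (vsc t1 u)" "w1 \<in> W" by blast
  moreover have "vsc s (vadd w1 (vsc t1 u)) = vadd (vsc s w1) (vsc (s * t1) u)"
    by (simp add: vadd_def vsc_def fun_eq_iff algebra_simps)
  ultimately show "vsc s a \<in> {vadd w (vsc t u) |w t. w \<in> W}" using W by blast
qed

lemma supp_on_subset_iff: "supp_on S \<subseteq> supp_on T \<longleftrightarrow> S \<subseteq> T"
proof
  assume ST: "supp_on S \<subseteq> supp_on T"
  show "S \<subseteq> T"
  proof
    fix i assume "i \<in> S"
    then have "ub i \<in> supp_on T" by (rule subsetD[OF ST ub_in_supp_on])
    then show "i \<in> T" using supp_on_nonzero[of "ub i" T i] by (simp add: ub_def)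
  qed
qed (auto simp: supp_on_def)

section \<open>Linear algebra and counting\<close>

definition rows_independent :: "'i::finite set \<Rightarrow> ('i \<Rightarrow> 'j \<Rightarrow> complex) \<Rightarrow> 'j set \<Rightarrow> bool" where
  "rows_independent I M J \<longleftrightarrow>
     (\<forall>v\<in>supp_on I. (\<forall>j\<in>J. (\<Sum>k\<in>I. v k * M k j) = 0) \<longrightarrow> v = vzero)"

lemma rows_independent_no_columns:
  assumes "rows_independent I M {}"
  shows "I = {}"
proof (rule equals0I)
  fix i assume "i \<in> I"
  then have "ub i = vzero"
    using assms ub_in_supp_on[of i I] unfolding rows_independent_def by simp
  then show False using ub_neq_vzero[of i] by simp
qed

lemma rows_independent_drop_zero_column:
  assumes "rows_independent I M (insert j J)" "\<forall>k\<in>I. M k j = 0"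
  shows "rows_independent I M J"
  using assms unfolding rows_independent_def by simp

text \<open>One step of Gaussian elimination: pivot on the nonzero entry in row i0, column j.\<close>
lemma rows_independent_eliminate:
  assumes indep: "rows_independent I M (insert j J)" and i0: "i0 \<in> I" "M i0 j \<noteq> 0"
  shows "rows_independent (I - {i0}) (\<lambda>k j'. M k j' - M k j / M i0 j * M i0 j') J"
  unfolding rows_independent_def
proof (intro ballI impI)
  fix v assume v: "v \<in> supp_on (I - {i0})"
    and ker: "\<forall>j'\<in>J. (\<Sum>k\<in>I - {i0}. v k * (M k j' - M k j / M i0 j * M i0 j')) = 0"
  define r where "r = - (\<Sum>k\<in>I - {i0}. v k * M k j) / M i0 j"
  define w where "w = v(i0 := r)"
  have w_sum: "(\<Sum>k\<in>I. w k * g k) = r * g i0 + (\<Sum>k\<in>I - {i0}. v k * g k)" for g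
    using sum.remove[OF finite i0(1), of "\<lambda>k. w k * g k"] by (simp add: w_def)
  have "w \<in> supp_on I" using v i0 by (auto simp: supp_on_def w_def)
  moreover have "\<forall>j'\<in>insert j J. (\<Sum>k\<in>I. w k * M k j') = 0"
  proof
    fix j' assume "j' \<in> insert j J"
    then consider "j' = j" | "j' \<in> J" by blast
    then show "(\<Sum>k\<in>I. w k * M k j') = 0"
    proof cases
      case 1
      then show ?thesis unfolding w_sum using i0 by (simp add: r_def)
    next
      case 2
      have "(\<Sum>k\<in>I - {i0}. v k * (M k j' - M k j / M i0 j * M i0 j')) =
            (\<Sum>k\<in>I - {i0}. v k * M k j') - (\<Sum>k\<in>I - {i0}. v k * M k j) / M i0 j * M i0 j'"
        by (simp add: algebra_simps sum_subtractf sum_distrib_left sum_divide_distrib sum_distrib_right)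
      with ker 2 show ?thesis unfolding w_sum by (simp add: r_def)
    qed
  qed
  ultimately have "w = vzero" using indep unfolding rows_independent_def by blast
  moreover have "v i0 = 0" using v by (simp add: supp_on_def)
  ultimately show "v = vzero" by (auto simp: w_def vzero_def fun_eq_iff split: if_splits)
qed

lemma rows_independent_card_le:
  assumes "finite J" "rows_independent I M J"
  shows "card I \<le> card J"
  using assms
proof (induction J arbitrary: I M rule: finite_induct)
  case empty
  then show ?case using rows_independent_no_columns by simp
next
  case (insert j J)
  show ?case
  proof (cases "\<forall>k\<in>I. M k j = 0")
    case True
    then have "card I \<le> card J"
      using insert.IH rows_independent_drop_zero_column[OF insert.prems] by blast
    then show ?thesis using insert.hyps by simp
  next
    case False
    then obtain i0 where i0: "i0 \<in> I" "M i0 j \<noteq> 0" by blast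
    have "card (I - {i0}) \<le> card J"
      using insert.IH rows_independent_eliminate[OF insert.prems i0] by blast
    then show ?thesis using insert.hyps i0 by (simp add: card_Diff_singleton)
  qed
qed

lemma exists_kernel_vector:
  fixes M :: "'i::finite \<Rightarrow> 'j \<Rightarrow> complex"
  assumes "finite J" "card J < card I"
  obtains v where "v \<in> supp_on I" "v \<noteq> vzero" "\<forall>j\<in>J. (\<Sum>k\<in>I. v k * M k j) = 0"
proof -
  have "\<not> rows_independent I M J"
    using rows_independent_card_le[OF assms(1)] assms(2) by (meson not_le)
  then show ?thesis using that unfolding rows_independent_def by blast
qed

lemma exists_two_kernel_vectors:
  fixes M :: "'i::finite \<Rightarrow> 'j \<Rightarrow> complex"
  assumes "finite J" "card J + 2 \<le> card I"
  obtains u1 u2 k where "u1 \<in> supp_on I" "u2 \<in> supp_on I" "k \<in> I" "u1 k \<noteq> 0" "u2 k = 0" "u2 \<noteq> vzero"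
    "\<forall>j\<in>J. (\<Sum>k\<in>I. u1 k * M k j) = 0" "\<forall>j\<in>J. (\<Sum>k\<in>I. u2 k * M k j) = 0"
proof -
  obtain u1 where u1: "u1 \<in> supp_on I" "u1 \<noteq> vzero" "\<forall>j\<in>J. (\<Sum>k\<in>I. u1 k * M k j) = 0"
    using exists_kernel_vector[OF assms(1), of I M] assms(2) by auto
  obtain k where k: "u1 k \<noteq> 0" using u1(2) by (auto simp: vzero_def fun_eq_iff)
  have kI: "k \<in> I" using supp_on_nonzero[OF u1(1) k] .
  then have "card J < card (I - {k})" using assms(2) by simp
  then obtain u2 where u2: "u2 \<in> supp_on (I - {k})" "u2 \<noteq> vzero"
    "\<forall>j\<in>J. (\<Sum>k\<in>I - {k}. u2 k * M k j) = 0"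
    using exists_kernel_vector[OF assms(1), of "I - {k}" M] by auto
  have u2k: "u2 k = 0" using u2(1) by (simp add: supp_on_def)
  have "(\<Sum>k\<in>I. u2 k * M k j) = (\<Sum>k\<in>I - {k}. u2 k * M k j)" for j
    by (rule sum.mono_neutral_right) (use u2k in auto)
  with u2(3) have "\<forall>j\<in>J. (\<Sum>k\<in>I. u2 k * M k j) = 0" by simp
  moreover have "u2 \<in> supp_on I" using supp_on_mono[OF u2(1)] by blast
  ultimately show ?thesis using that[OF u1(1) _ kI k u2k u2(2) u1(3)] by blast
qed

lemma card_le_if_injective:
  fixes M :: "'i::finite \<Rightarrow> 'j \<Rightarrow> complex"
  assumes "finite J"
    and into: "\<And>k j. k \<in> I \<Longrightarrow> M k j \<noteq> 0 \<Longrightarrow> j \<in> J"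
    and inj: "\<And>v. v \<in> supp_on I \<Longrightarrow> (\<And>j. (\<Sum>k\<in>I. v k * M k j) = 0) \<Longrightarrow> v = vzero"
  shows "card I \<le> card J"
proof (rule rows_independent_card_le[OF assms(1)])
  have "(\<Sum>k\<in>I. v k * M k j) = 0" if "j \<notin> J" for v j
    using into that by (intro sum.neutral) auto
  then show "rows_independent I M J"
    unfolding rows_independent_def using inj by blast
qed

lemma sum_eq_if_fiber_cards_eq:
  fixes kA :: "'a \<Rightarrow> 'k" and kB :: "'b \<Rightarrow> 'k" and F :: "'a \<Rightarrow> 'c::comm_ring_1"
  assumes fin: "finite A" "finite B"
    and cards: "\<And>v. card {i\<in>A. kA i = v} = card {j\<in>B. kB j = v}"
    and vals: "\<And>i j. i \<in> A \<Longrightarrow> j \<in> B \<Longrightarrow> kA i = kB j \<Longrightarrow> F i = G j"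
  shows "sum F A = sum G B"
proof -
  have memA: "v \<in> kA ` A \<longleftrightarrow> card {i\<in>A. kA i = v} \<noteq> 0"
    and memB: "v \<in> kB ` B \<longleftrightarrow> card {j\<in>B. kB j = v} \<noteq> 0" for v
    using fin by auto
  have im: "kA ` A = kB ` B"
    unfolding set_eq_iff memA memB cards by (rule allI) (rule refl)
  have "(\<Sum>i\<in>{i\<in>A. kA i = v}. F i) = (\<Sum>j\<in>{j\<in>B. kB j = v}. G j)" if "v \<in> kB ` B" for v
  proof -
    obtain j0 where j0: "j0 \<in> B" "kB j0 = v" using \<open>v \<in> kB ` B\<close> by blast
    obtain i0 where i0: "i0 \<in> A" "kA i0 = v" using im j0 by (metis imageE imageI)
    have "(\<Sum>i\<in>{i\<in>A. kA i = v}. F i) = (\<Sum>i\<in>{i\<in>A. kA i = v}. G j0)"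
      by (rule sum.cong) (use vals j0 in auto)
    also have "\<dots> = of_nat (card {j\<in>B. kB j = v}) * G j0" using cards[of v] by simp
    also have "\<dots> = (\<Sum>j\<in>{j\<in>B. kB j = v}. G j0)" by simp
    also have "\<dots> = (\<Sum>j\<in>{j\<in>B. kB j = v}. G j)"
    proof (rule sum.cong[OF refl])
      fix j assume "j \<in> {j\<in>B. kB j = v}"
      then have "F i0 = G j" using vals[OF i0(1), of j] i0(2) by simp
      moreover have "F i0 = G j0" using vals[OF i0(1) j0(1)] i0(2) j0(2) by simp
      ultimately show "G j0 = G j" by simp
    qed
    finally show ?thesis .
  qed
  then have "(\<Sum>v\<in>kA ` A. \<Sum>i\<in>{i\<in>A. kA i = v}. F i) = (\<Sum>v\<in>kB ` B. \<Sum>j\<in>{j\<in>B. kB j = v}. G j)"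
    unfolding im by (rule sum.cong[OF refl])
  then show ?thesis
    using sum.image_gen[OF fin(1), of F kA] sum.image_gen[OF fin(2), of G kB] by simp
qed

lemma complex_quadratic_has_root:
  fixes a b c :: complex
  assumes "a \<noteq> 0"
  obtains l where "a * l\<^sup>2 + b * l + c = 0"
proof
  define s where "s = csqrt (b\<^sup>2 - 4 * a * c)"
  define l where "l = (- b + s) / (2 * a)"
  have "4 * a * (a * l\<^sup>2 + b * l + c) = (2 * a * l + b)\<^sup>2 - (b\<^sup>2 - 4 * a * c)"
    by (simp add: algebra_simps power2_eq_square)
  also have "2 * a * l + b = s" unfolding l_def using assms by (simp add: field_simps)
  finally show "a * l\<^sup>2 + b * l + c = 0" using assms by (simp add: s_def)
qed

lemma cnj_eq_minus_one_iff: "cnj z = -1 \<longleftrightarrow> z = -1"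
  by (metis complex_cnj_cnj complex_cnj_minus complex_cnj_one)

lemma cis_2pi_eq_cis_2piD:
  assumes "cis (2 * pi * a) = cis (2 * pi * b)"
  obtains z :: int where "a = b + of_int z"
proof -
  have "cis (2 * pi * (a - b)) = 1"
    using assms by (simp add: cis_divide[symmetric] algebra_simps)
  then have "cos (2 * pi * (a - b)) = 1" by (simp add: complex_eq_iff)
  then obtain n :: int where "2 * pi * (a - b) = of_int n * 2 * pi"
    using cos_one_2pi_int by blast
  then show ?thesis using that[of n] by simp
qed

lemma card_Int_split:
  fixes Z :: "'i::finite set"
  assumes "Z \<subseteq> V"
  shows "card (V \<inter> A) = card ((V - Z) \<inter> A) + card (Z \<inter> A)"
proof -
  have "V \<inter> A \<inter> Z = Z \<inter> A" "V \<inter> A - Z = (V - Z) \<inter> A" using assms by blast+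
  then show ?thesis using card_Int_Diff[of "V \<inter> A" Z] by simp
qed

lemma sum_psign:
  "(\<Sum>i\<in>S. psign (p i)) = of_nat (card (S \<inter> {i. p i = False})) - of_nat (card (S \<inter> {i. p i = True}))"
  if "finite S"
proof -
  have "(\<Sum>i\<in>S. psign (p i)) = (\<Sum>i\<in>S \<inter> {i. p i = False}. psign (p i)) + (\<Sum>i\<in>S - {i. p i = False}. psign (p i))"
    using that by (rule sum.Int_Diff)
  also have "S - {i. p i = False} = S \<inter> {i. p i = True}" by auto
  finally show ?thesis by (simp add: psign_def)
qed

section \<open>Minimal gradings twisted by sigma\<close>

locale twisted_minimal_grading =
  fixes p :: "'i::finite \<Rightarrow> bool"
    and c :: "'i \<Rightarrow> 'i \<Rightarrow> 'i \<Rightarrow> complex"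
    and B :: "'i \<Rightarrow> 'i \<Rightarrow> complex"
    and hv :: complex
    and x e f :: "'i vec"
    and m mu :: "'i \<Rightarrow> real"
    and H Np Nm Z0 :: "'i set"
  assumes lie: "lie_superalgebra p c"
    and form: "good_form p c B"
    and hvee: "dual_coxeter c B hv"
    and brk_e_f: "brk c e f = x"
    and e_even: "e \<in> supp_on {i. \<not> p i}" and f_even: "f \<in> supp_on {i. \<not> p i}"
    and e_nonzero: "e \<noteq> vzero"
    and grading: "\<And>i. brk c x (ub i) = vsc (of_real (m i)) (ub i)"
    and grading_vals: "\<And>i. m i \<in> {-1, -1/2, 0, 1/2, 1}"
    and g1: "supp_on {i. m i = 1} = {vsc t e |t. True}"
    and gm1: "supp_on {i. m i = -1} = {vsc t f |t. True}"
    and H_even_deg0: "\<And>i. i \<in> H \<Longrightarrow> m i = 0 \<and> \<not> p i"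
    and x_in_H: "x \<in> supp_on H"
    and root_e: "\<And>h. h \<in> supp_on H \<Longrightarrow> brk c h e = vsc (2 * frm B x h) e"
    and root_f: "\<And>h. h \<in> supp_on H \<Longrightarrow> brk c h f = vsc (- (2 * frm B x h)) f"
    and theta_norm: "frm B x x = 1/2"
    and sig_aut: "\<And>a b. sig mu (brk c a b) = brk c (sig mu a) (sig mu b)"
    and sig_form: "\<And>a b. frm B (sig mu a) (sig mu b) = frm B a b"
    and sig_f: "sig mu f = f"
    and weights: "\<And>i h. h \<in> supp_on H \<Longrightarrow> \<exists>t. brk c h (ub i) = vsc t (ub i)"
    and decomp: "{i. cis (2 * pi * mu i) = cis (pi * (2 * m i))} = Np \<union> H \<union> Nm"
    and Np_H_disj: "Np \<inter> H = {}" and Np_Nm_disj: "Np \<inter> Nm = {}"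
    and Np_subalg: "subalg c (supp_on Np)"
    and Np_isotropic: "\<And>a b. a \<in> supp_on Np \<Longrightarrow> b \<in> supp_on Np \<Longrightarrow> frm B a b = 0"
    and Nm_isotropic: "\<And>a b. a \<in> supp_on Nm \<Longrightarrow> b \<in> supp_on Nm \<Longrightarrow> frm B a b = 0"
    and f_in_Np: "f \<in> supp_on Np"
    and Np_half_max_isotropic: "max_isotropic (\<lambda>a b. frm B f (brk c a b))
       (supp_on {i. cis (2 * pi * mu i) = cis (pi * (2 * m i)) \<and> m i = 1/2})
       (supp_on (Np \<inter> {i. m i = 1/2}))"
    and Z0_sub: "Z0 \<subseteq> Nm \<inter> {i. m i = 1/2}" and card_Z0: "card Z0 \<le> 1"
    and Nm_half_max_isotropic: "max_isotropic (\<lambda>a b. frm B f (brk c a b))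
       (supp_on {i. cis (2 * pi * mu i) = cis (pi * (2 * m i)) \<and> m i = 1/2})
       (supp_on (Nm \<inter> {i. m i = 1/2} - Z0))"
begin

text \<open>
  The basis vector u_i has degree m i and sigma-eigenvalue eps i, so that g(sigma) is indexed
  by Np \<union> H \<union> Nm; theta h = 2 (x | h) is the highest root, and Z0 indexes g_1/2(sigma)_0.
\<close>

abbreviation eps :: "'i \<Rightarrow> complex" where "eps i \<equiv> cis (2 * pi * mu i)"
abbreviation theta :: "'i vec \<Rightarrow> complex" where "theta h \<equiv> 2 * frm B x h"

lemma c_antisym: "c i j k = - psign (p i \<and> p j) * c j i k"
  using lie unfolding lie_superalgebra_def by blast

lemma c_parity: "c i j k \<noteq> 0 \<Longrightarrow> p k = (p i \<noteq> p j)"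
  using lie unfolding lie_superalgebra_def by blast

lemma jacobi_coords:
  "(\<Sum>n\<in>UNIV. c j l n * c i n k) =
   (\<Sum>n\<in>UNIV. c i j n * c n l k) + psign (p i \<and> p j) * (\<Sum>n\<in>UNIV. c i l n * c j n k)"
proof -
  have "brk c (ub i) (brk c (ub j) (ub l)) =
        vadd (brk c (brk c (ub i) (ub j)) (ub l))
             (vsc (psign (p i \<and> p j)) (brk c (ub j) (brk c (ub i) (ub l))))"
    using lie unfolding lie_superalgebra_def by blast
  from fun_cong[OF this, of k] show ?thesis
    unfolding brk_ub_ub brk_ub_left brk_ub_right vadd_def vsc_def by simp
qed

lemma frm_nondegenerate: "(\<And>b. frm B a b = 0) \<Longrightarrow> a = vzero"
  using form unfolding good_form_def by blast

lemma B_parity: "B i j \<noteq> 0 \<Longrightarrow> p i = p j"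
  using form unfolding good_form_def by blast

lemma B_supersym: "B i j = psign (p i \<and> p j) * B j i"
  using form unfolding good_form_def by blast

lemma frm_invariant: "frm B (brk c a b) d = frm B a (brk c b d)"
  using form unfolding good_form_def by blast

lemma m_cases: "m i = -1 \<or> m i = -1/2 \<or> m i = 0 \<or> m i = 1/2 \<or> m i = 1"
  using grading_vals[of i] by auto

lemma supp_H_even_deg0: "h \<in> supp_on H \<Longrightarrow> h k \<noteq> 0 \<Longrightarrow> m k = 0 \<and> \<not> p k"
  by (rule H_even_deg0[OF supp_on_nonzero])

lemma brk_H_ub: "h \<in> supp_on H \<Longrightarrow> brk c h (ub i) = vsc (wt c i h) (ub i)"
proof -
  assume "h \<in> supp_on H"
  then obtain t where t: "brk c h (ub i) = vsc t (ub i)" using weights by blast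
  then have "wt c i h = t" by (simp add: wt_def vsc_def ub_def)
  with t show ?thesis by simp
qed

lemma wt_ub: "wt c k (ub i) = c i k k"
  by (simp add: wt_def brk_ub_ub)

lemma wt_linear: "h \<in> supp_on H \<Longrightarrow> wt c k h = (\<Sum>i\<in>H. h i * wt c k (ub i))"
  unfolding wt_ub unfolding wt_def brk_ub_right by (rule sum_supp_on)

lemma c_H_left:
  assumes "i \<in> H"
  shows "c i j k = (if k = j then wt c j (ub i) else 0)"
proof -
  have "(\<lambda>k. c i j k) = vsc (wt c j (ub i)) (ub j)"
    using brk_H_ub[OF ub_in_supp_on[OF assms], of j] by (simp only: brk_ub_ub)
  from fun_cong[OF this, of k] show ?thesis by (simp add: vsc_def ub_def)
qed

lemma wt_add_ub:
  assumes i: "i \<in> H" and cjl: "c j l k \<noteq> 0"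
  shows "wt c k (ub i) = wt c j (ub i) + wt c l (ub i)"
proof -
  have "psign (p i \<and> p j) = 1" using H_even_deg0[OF i] by (simp add: psign_def)
  then have "c j l k * wt c k (ub i) = wt c j (ub i) * c j l k + wt c l (ub i) * c j l k"
    using jacobi_coords[of j l i k] c_H_left[OF i] by (simp add: ub_simps cong: if_cong)
  then have "c j l k * (wt c k (ub i) - wt c j (ub i) - wt c l (ub i)) = 0"
    by (simp add: algebra_simps)
  with cjl have "wt c k (ub i) - wt c j (ub i) - wt c l (ub i) = 0" by simp
  then show ?thesis by (simp only: diff_diff_eq right_minus_eq)
qed

lemma wt_add: "h \<in> supp_on H \<Longrightarrow> c j l k \<noteq> 0 \<Longrightarrow> wt c k h = wt c j h + wt c l h"
  by (simp add: wt_linear wt_add_ub algebra_simps sum.distrib)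

lemma wt_x: "wt c i x = of_real (m i)"
  using grading by (simp add: wt_def vsc_def ub_def)

lemma m_add: "c j l k \<noteq> 0 \<Longrightarrow> m k = m j + m l"
  using wt_add[OF x_in_H] by (simp add: wt_x) (metis of_real_add of_real_eq_iff)

lemma B_wt_ub:
  assumes i0: "i0 \<in> H" and Bij: "B i j \<noteq> 0"
  shows "wt c i (ub i0) + wt c j (ub i0) = 0"
proof -
  have "psign (p i \<and> p i0) = 1" using H_even_deg0[OF i0] by (simp add: psign_def)
  then have "c i i0 k = - (if k = i then wt c i (ub i0) else 0)" for k
    using c_antisym[of i i0 k] c_H_left[OF i0, of i k] by simp
  then have "frm B (brk c (ub i) (ub i0)) (ub j) = - wt c i (ub i0) * B i j"
    unfolding brk_ub_ub frm_ub_right by (simp add: ub_simps sum_negf cong: if_cong)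
  moreover have "frm B (ub i) (brk c (ub i0) (ub j)) = wt c j (ub i0) * B i j"
    unfolding brk_ub_ub frm_ub_left using c_H_left[OF i0] by (simp add: ub_simps cong: if_cong)
  ultimately have "(wt c i (ub i0) + wt c j (ub i0)) * B i j = 0"
    using frm_invariant[of "ub i" "ub i0" "ub j"] by (simp add: algebra_simps)
  with Bij show ?thesis by simp
qed

lemma B_wt: "h \<in> supp_on H \<Longrightarrow> B i j \<noteq> 0 \<Longrightarrow> wt c i h + wt c j h = 0"
  by (simp add: wt_linear B_wt_ub sum.distrib[symmetric] distrib_left[symmetric])

lemma B_m: "B i j \<noteq> 0 \<Longrightarrow> m i + m j = 0"
  using B_wt[OF x_in_H] by (simp add: wt_x) (metis of_real_add of_real_eq_0_iff)

lemma sig_ub: "sig mu (ub i) = vsc (eps i) (ub i)"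
  by (simp add: sig_def vsc_def ub_def fun_eq_iff)

lemma eps_mult: "c i j k \<noteq> 0 \<Longrightarrow> eps k = eps i * eps j"
proof -
  assume cijk: "c i j k \<noteq> 0"
  have "sig mu (brk c (ub i) (ub j)) k = brk c (sig mu (ub i)) (sig mu (ub j)) k"
    using sig_aut by simp
  then have "eps k * c i j k = eps i * eps j * c i j k"
    unfolding sig_ub brk_bilinear by (simp add: brk_ub_ub sig_def vsc_def mult.commute)
  with cijk show ?thesis by (simp add: mult.commute)
qed

lemma eps_B: "B i j \<noteq> 0 \<Longrightarrow> eps i * eps j = 1"
proof -
  assume Bij: "B i j \<noteq> 0"
  have "frm B (sig mu (ub i)) (sig mu (ub j)) = frm B (ub i) (ub j)"
    using sig_form by simp
  then have "eps i * eps j * B i j = B i j"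
    unfolding sig_ub frm_bilinear frm_ub_ub by (simp add: algebra_simps)
  with Bij show ?thesis by simp
qed

lemma eps_inverse:
  assumes "eps i * eps j = 1"
  shows "eps j = cnj (eps i)"
proof -
  have "eps i * cnj (eps i) = 1" by (simp add: cis_cnj cis_mult)
  then have "eps j = (eps i * eps j) * cnj (eps i)" by (simp add: mult_ac)
  with assms show ?thesis by simp
qed

lemma cis_pi_half_deg: "m i = 1/2 \<or> m i = -1/2 \<Longrightarrow> cis (pi * (2 * m i)) = -1"
proof (elim disjE)
  assume h: "m i = 1/2" show ?thesis unfolding h by (simp add: cis.code complex_eq_iff)
next
  assume h: "m i = -1/2" show ?thesis unfolding h by (simp add: cis.code complex_eq_iff)
qed

lemma in_decomp_iff: "i \<in> Np \<union> H \<union> Nm \<longleftrightarrow> eps i = cis (pi * (2 * m i))"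
  using decomp by blast

lemma half_deg_in_N_iff:
  assumes "m i = 1/2 \<or> m i = -1/2"
  shows "i \<in> Np \<union> Nm \<longleftrightarrow> eps i = -1"
  using in_decomp_iff[of i] cis_pi_half_deg[OF assms] H_even_deg0[of i] assms by auto

lemma c_props: "c i j k \<noteq> 0 \<Longrightarrow> p k = (p i \<noteq> p j) \<and> eps k = eps i * eps j \<and> m k = m i + m j \<and>
   (\<forall>h\<in>supp_on H. wt c k h = wt c i h + wt c j h)"
  using c_parity eps_mult m_add wt_add by blast

lemma B_props: "B i j \<noteq> 0 \<Longrightarrow> p i = p j \<and> eps i * eps j = 1 \<and> m i + m j = 0 \<and>
   (\<forall>h\<in>supp_on H. wt c i h + wt c j h = 0)"
  using B_parity eps_B B_m B_wt by blast

lemma x_nonzero: "x \<noteq> vzero"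
  using theta_norm frm_vzero[of B x] by auto

lemma f_nonzero: "f \<noteq> vzero"
  using brk_e_f x_nonzero brk_vzero(2)[of c e] by auto

definition e_idx :: 'i where "e_idx = (SOME j. {i. m i = 1} = {j} \<and> e = vsc (e j) (ub j) \<and> e j \<noteq> 0)"
definition f_idx :: 'i where "f_idx = (SOME j. {i. m i = -1} = {j} \<and> f = vsc (f j) (ub j) \<and> f j \<noteq> 0)"

lemma e_idx: "{i. m i = 1} = {e_idx}" "e = vsc (e e_idx) (ub e_idx)" "e e_idx \<noteq> 0"
proof -
  have "{i. m i = 1} = {e_idx} \<and> e = vsc (e e_idx) (ub e_idx) \<and> e e_idx \<noteq> 0"
    unfolding e_idx_def by (rule someI_ex[OF supp_on_eq_line[OF g1 e_nonzero]])
  then show "{i. m i = 1} = {e_idx}" "e = vsc (e e_idx) (ub e_idx)" "e e_idx \<noteq> 0" by auto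
qed

lemma f_idx: "{i. m i = -1} = {f_idx}" "f = vsc (f f_idx) (ub f_idx)" "f f_idx \<noteq> 0"
proof -
  have "{i. m i = -1} = {f_idx} \<and> f = vsc (f f_idx) (ub f_idx) \<and> f f_idx \<noteq> 0"
    unfolding f_idx_def by (rule someI_ex[OF supp_on_eq_line[OF gm1 f_nonzero]])
  then show "{i. m i = -1} = {f_idx}" "f = vsc (f f_idx) (ub f_idx)" "f f_idx \<noteq> 0" by auto
qed

lemma m_eq_1_iff: "m i = 1 \<longleftrightarrow> i = e_idx" using e_idx(1) by auto
lemma m_eq_minus_1_iff: "m i = -1 \<longleftrightarrow> i = f_idx" using f_idx(1) by auto

lemma m_e_idx: "m e_idx = 1" and m_f_idx: "m f_idx = -1"
  by (simp_all add: m_eq_1_iff m_eq_minus_1_iff)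

lemma p_e_idx: "\<not> p e_idx" using e_even e_idx(3) by (auto simp: supp_on_def)
lemma p_f_idx: "\<not> p f_idx" using f_even f_idx(3) by (auto simp: supp_on_def)

lemma f_idx_in_Np: "f_idx \<in> Np" using supp_on_nonzero[OF f_in_Np f_idx(3)] .

lemma eps_f_idx: "eps f_idx = 1"
  using fun_cong[OF sig_f, of f_idx] f_idx(3) by (simp add: sig_def)

lemma brk_e_left: "brk c e v = vsc (e e_idx) (brk c (ub e_idx) v)"
  by (subst e_idx(2)) (simp add: brk_bilinear)

lemma brk_f_left: "brk c f v = vsc (f f_idx) (brk c (ub f_idx) v)"
  by (subst f_idx(2)) (simp add: brk_bilinear)

lemma wt_e_idx:
  assumes h: "h \<in> supp_on H"
  shows "wt c e_idx h = theta h"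
proof -
  have "brk c h e = vsc (e e_idx) (vsc (wt c e_idx h) (ub e_idx))"
    by (subst e_idx(2)) (simp add: brk_bilinear brk_H_ub[OF h])
  then have "e e_idx * wt c e_idx h = theta h * e e_idx"
    using fun_cong[OF root_e[OF h], of e_idx] by (simp add: vsc_def ub_def)
  with e_idx(3) show ?thesis by simp
qed

lemma wt_f_idx:
  assumes h: "h \<in> supp_on H"
  shows "wt c f_idx h = - theta h"
proof -
  have "brk c h f = vsc (f f_idx) (vsc (wt c f_idx h) (ub f_idx))"
    by (subst f_idx(2)) (simp add: brk_bilinear brk_H_ub[OF h])
  then have "f f_idx * (wt c f_idx h + theta h) = 0"
    using fun_cong[OF root_f[OF h], of f_idx] by (simp add: vsc_def ub_def algebra_simps)
  with f_idx(3) show ?thesis by (simp add: eq_neg_iff_add_eq_0)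
qed

lemma x_coords: "x k = e e_idx * f f_idx * c e_idx f_idx k"
proof -
  have "x = brk c (vsc (e e_idx) (ub e_idx)) (vsc (f f_idx) (ub f_idx))"
    using brk_e_f by (simp only: e_idx(2)[symmetric] f_idx(2)[symmetric])
  then show ?thesis by (simp only: brk_bilinear brk_ub_ub) (simp add: vsc_def mult_ac)
qed

lemma eps_e_idx: "eps e_idx = 1"
proof -
  obtain k where k: "x k \<noteq> 0" using x_nonzero by (auto simp: vzero_def fun_eq_iff)
  then have "k \<in> Np \<union> H \<union> Nm" "m k = 0"
    using supp_on_nonzero[OF x_in_H k] supp_H_even_deg0[OF x_in_H k] by auto
  then have "eps k = 1" using in_decomp_iff[of k] by simp
  moreover have "c e_idx f_idx k \<noteq> 0" using k x_coords[of k] by auto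
  ultimately show ?thesis using eps_mult[of e_idx f_idx k] eps_f_idx by simp
qed

lemma e_idx_notin_Np: "e_idx \<notin> Np"
proof
  assume e_idx_in: "e_idx \<in> Np"
  have "e k = 0" if "k \<notin> Np" for k
  proof -
    have "k \<noteq> e_idx" using that e_idx_in by blast
    then show ?thesis using fun_cong[OF e_idx(2), of k] by (simp add: vsc_def ub_def)
  qed
  then have "e \<in> supp_on Np" by (simp add: supp_on_def)
  then have "x \<in> supp_on Np"
    using f_in_Np Np_subalg brk_e_f by (auto simp: subalg_def)
  then have "x = vzero"
    using x_in_H Np_H_disj by (auto simp: supp_on_def vzero_def fun_eq_iff)
  with x_nonzero show False ..
qed

lemma jacobi_ub:
  "brk c (ub i) (brk c (ub j) v) =
   vadd (brk c (brk c (ub i) (ub j)) v) (vsc (psign (p i \<and> p j)) (brk c (ub j) (brk c (ub i) v)))"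
proof
  fix k
  have "brk c (brk c (ub i) (ub j)) v k = (\<Sum>l\<in>UNIV. v l * (\<Sum>n\<in>UNIV. c i j n * c n l k))"
    unfolding brk_ub_ub unfolding brk_def by (simp add: sum_distrib_left mult_ac) (rule sum.swap)
  moreover have "brk c (ub i) (brk c (ub j) v) k = (\<Sum>l\<in>UNIV. v l * (\<Sum>n\<in>UNIV. c i j n * c n l k)
      + psign (p i \<and> p j) * (v l * (\<Sum>n\<in>UNIV. c i l n * c j n k)))"
    unfolding brk_ub_brk_ub jacobi_coords[of j _ i k] by (simp add: algebra_simps)
  ultimately show "brk c (ub i) (brk c (ub j) v) k = vadd (brk c (brk c (ub i) (ub j)) v)
      (vsc (psign (p i \<and> p j)) (brk c (ub j) (brk c (ub i) v))) k"
    unfolding vadd_def vsc_def brk_ub_brk_ub[of c j i] by (simp add: sum.distrib sum_distrib_left)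
qed

lemma brk_e_brk_f: "brk c e (brk c f v) = vadd (brk c x v) (brk c f (brk c e v))"
proof -
  have x: "x = vsc (e e_idx * f f_idx) (brk c (ub e_idx) (ub f_idx))"
    using x_coords by (simp add: brk_ub_ub vsc_def fun_eq_iff)
  have "psign (p e_idx \<and> p f_idx) = 1" using p_e_idx by (simp add: psign_def)
  then show ?thesis
    unfolding brk_e_left brk_f_left x
    by (simp add: brk_bilinear vsc_vsc jacobi_ub[of e_idx f_idx] vsc_vadd vsc_1_left mult.commute)
qed

lemma brk_x_homogeneous: "v \<in> supp_on {i. m i = g} \<Longrightarrow> brk c x v = vsc (of_real g) v"
  unfolding fun_eq_iff brk_expand_right[of c x v] grading vsc_def
  by (auto simp: sum_supp_on ub_simps supp_on_def cong: if_cong)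

lemma brk_ub_homogeneous_vanishes:
  assumes "v \<in> supp_on {l. m l = g}" "\<And>k. m k \<noteq> m i + g"
  shows "brk c (ub i) v = vzero"
proof -
  have zero: "v l * c i l k = 0" for l k
    using assms supp_on_nonzero[OF assms(1), of l] m_add[of i l k] by fastforce
  show ?thesis unfolding brk_ub_left vzero_def fun_eq_iff
    by (intro allI sum.neutral ballI zero)
qed

lemma brk_e_half_vanishes:
  assumes "v \<in> supp_on {l. m l = 1/2}"
  shows "brk c e v = vzero"
proof -
  have "m k \<noteq> m e_idx + 1/2" for k using m_cases[of k] m_e_idx by auto
  then show ?thesis
    using brk_ub_homogeneous_vanishes[OF assms] by (simp add: brk_e_left vsc_def vzero_def)
qed

lemma brk_f_minus_half_vanishes:
  assumes "v \<in> supp_on {l. m l = -1/2}"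
  shows "brk c f v = vzero"
proof -
  have "m k \<noteq> m f_idx + -1/2" for k using m_cases[of k] m_f_idx by auto
  then show ?thesis
    using brk_ub_homogeneous_vanishes[OF assms] by (simp add: brk_f_left vsc_def vzero_def)
qed

lemma brk_e_brk_f_half:
  assumes "v \<in> supp_on {l. m l = 1/2}"
  shows "brk c e (brk c f v) = vsc (1/2) v"
proof -
  have "brk c e (brk c f v) = vadd (vsc (1/2) v) (brk c f vzero)"
    using brk_e_brk_f[of v] brk_x_homogeneous[OF assms] brk_e_half_vanishes[OF assms] by simp
  then show ?thesis by (simp only: brk_vzero) (simp add: vadd_def vzero_def)
qed

lemma brk_f_brk_e_minus_half:
  assumes "v \<in> supp_on {l. m l = -1/2}"
  shows "brk c f (brk c e v) = vsc (1/2) v"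
proof
  fix k
  have "vzero = vadd (vsc (-1/2) v) (brk c f (brk c e v))"
    using brk_e_brk_f[of v] brk_x_homogeneous[OF assms] brk_f_minus_half_vanishes[OF assms]
    by (simp add: brk_vzero)
  from fun_cong[OF this, of k] show "brk c f (brk c e v) k = vsc (1/2) v k"
    by (simp add: vadd_def vsc_def vzero_def algebra_simps)
qed

lemma brk_f_injective_half:
  assumes "v \<in> supp_on {l. m l = 1/2}" "brk c f v = vzero"
  shows "v = vzero"
proof -
  have "vsc (1/2) v = vzero" using brk_e_brk_f_half[OF assms(1)] assms(2) by (simp add: brk_vzero)
  then show ?thesis by (simp add: vsc_eq_vzero_iff)
qed

lemma brk_e_injective_minus_half:
  assumes "v \<in> supp_on {l. m l = -1/2}" "brk c e v = vzero"
  shows "v = vzero"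
proof -
  have "vsc (1/2) v = vzero" using brk_f_brk_e_minus_half[OF assms(1)] assms(2) by (simp add: brk_vzero)
  then show ?thesis by (simp add: vsc_eq_vzero_iff)
qed

lemma card_le_via_brk_f:
  assumes R: "\<And>i k. m i = 1/2 \<Longrightarrow> R i \<Longrightarrow> c f_idx i k \<noteq> 0 \<Longrightarrow> R' k"
  shows "card {i. m i = 1/2 \<and> R i} \<le> card {k. m k = -1/2 \<and> R' k}"
proof (rule card_le_if_injective[where M = "c f_idx"])
  fix i k assume "i \<in> {i. m i = 1/2 \<and> R i}" "c f_idx i k \<noteq> 0"
  then show "k \<in> {k. m k = -1/2 \<and> R' k}" using R m_add m_f_idx by fastforce
next
  fix v assume v: "v \<in> supp_on {i. m i = 1/2 \<and> R i}"
    and ker: "\<And>k. (\<Sum>i\<in>{i. m i = 1/2 \<and> R i}. v i * c f_idx i k) = 0"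
  have fv: "brk c f v = vzero"
    unfolding brk_f_left brk_ub_left sum_supp_on[OF v] ker by (simp add: vsc_def vzero_def)
  have "v \<in> supp_on {l. m l = 1/2}" by (rule supp_on_mono[OF v]) auto
  then show "v = vzero" using fv by (rule brk_f_injective_half)
qed simp

lemma card_le_via_brk_e:
  assumes R: "\<And>k i. m k = -1/2 \<Longrightarrow> R' k \<Longrightarrow> c e_idx k i \<noteq> 0 \<Longrightarrow> R i"
  shows "card {k. m k = -1/2 \<and> R' k} \<le> card {i. m i = 1/2 \<and> R i}"
proof (rule card_le_if_injective[where M = "c e_idx"])
  fix k i assume "k \<in> {k. m k = -1/2 \<and> R' k}" "c e_idx k i \<noteq> 0"
  then show "i \<in> {i. m i = 1/2 \<and> R i}" using R m_add m_e_idx by fastforce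
next
  fix v assume v: "v \<in> supp_on {k. m k = -1/2 \<and> R' k}"
    and ker: "\<And>i. (\<Sum>k\<in>{k. m k = -1/2 \<and> R' k}. v k * c e_idx k i) = 0"
  have ev: "brk c e v = vzero"
    unfolding brk_e_left brk_ub_left sum_supp_on[OF v] ker by (simp add: vsc_def vzero_def)
  have "v \<in> supp_on {l. m l = -1/2}" by (rule supp_on_mono[OF v]) auto
  then show "v = vzero" using ev by (rule brk_e_injective_minus_half)
qed simp

abbreviation s :: "'i \<Rightarrow> real" where "s i \<equiv> sval Np m mu i"

lemma sval_eqI:
  assumes "i \<notin> Np" "n = mu i + of_int k" "- m i < n" "n \<le> - m i + 1"
  shows "s i = n"
proof -
  have "(LEAST n::real. (\<exists>k::int. n = mu i + of_int k) \<and> n > - m i) = n"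
  proof (rule Least_equality)
    fix y assume "(\<exists>k::int. y = mu i + of_int k) \<and> y > - m i"
    then obtain k' :: int where y: "y = mu i + of_int k'" "y > - m i" by auto
    with assms have "k' \<ge> k" by linarith
    with y assms show "n \<le> y" by simp
  qed (use assms in auto)
  with assms(1) show ?thesis by (simp add: sval_def)
qed

lemma sval_bounds:
  assumes "i \<notin> Np"
  obtains k :: int where "s i = mu i + of_int k" "- m i < s i" "s i \<le> - m i + 1"
proof -
  define k where "k = \<lfloor>- m i - mu i\<rfloor> + 1"
  have "- m i < mu i + of_int k" "mu i + of_int k \<le> - m i + 1" unfolding k_def by linarith+
  with sval_eqI[OF assms refl] that show ?thesis by simp
qed

lemma sval_Np: "i \<in> Np \<Longrightarrow> s i = - m i"
  by (simp add: sval_def)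

lemma s_f_idx: "s f_idx = 1"
  using sval_Np[OF f_idx_in_Np] m_f_idx by simp

lemma s_e_idx: "s e_idx = 0"
proof -
  obtain z :: int where "mu e_idx = 0 + of_int z"
    using eps_e_idx cis_2pi_eq_cis_2piD[of "mu e_idx" 0] by auto
  then show ?thesis by (intro sval_eqI[OF e_idx_notin_Np, of _ "- z"]) (use m_e_idx in auto)
qed

lemma s_shift:
  assumes "i \<notin> Np" "k \<notin> Np" "m i = 1/2" "m k = -1/2" "eps i = eps k"
  shows "s k = s i + 1"
proof -
  obtain z :: int where z: "mu k = mu i + of_int z"
    using assms(5) cis_2pi_eq_cis_2piD[of "mu k" "mu i"] by auto
  obtain z' :: int where z': "s i = mu i + of_int z'" "- m i < s i" "s i \<le> - m i + 1"
    using sval_bounds[OF assms(1)] by blast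
  show ?thesis
    by (rule sval_eqI[OF assms(2), of _ "z' + 1 - z"]) (use z z' assms(3,4) in auto)
qed

lemma s_conj:
  assumes "i \<notin> Np" "j \<notin> Np" "m i = 1/2" "m j = 1/2" "eps j = cnj (eps i)" "eps i \<noteq> -1"
  shows "s j = - s i"
proof -
  have "eps j = cis (2 * pi * (- mu i))" using assms(5) by (simp add: cis_cnj)
  then obtain z :: int where z: "mu j = - mu i + of_int z"
    using cis_2pi_eq_cis_2piD by blast
  obtain z' :: int where z': "s i = mu i + of_int z'" "- m i < s i" "s i \<le> - m i + 1"
    using sval_bounds[OF assms(1)] by blast
  have "s i \<noteq> 1/2"
  proof
    assume "s i = 1/2"
    then have mu: "mu i = 1/2 + of_int (- z')" using z'(1) by simp
    have "2 * pi * mu i = pi + 2 * pi * of_int (- z')" unfolding mu by (simp add: algebra_simps)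
    then have "eps i = cis pi * cis (2 * pi * of_int (- z'))" by (simp only: cis_mult)
    also have "cis (2 * pi * of_int (- z')) = 1" by (rule cis_multiple_2pi) simp
    finally show False using assms(6) by simp
  qed
  then show ?thesis
    by (intro sval_eqI[OF assms(2), of _ "- z - z'"]) (use z z' assms(3,4) in auto)
qed

lemma s_half_sig:
  assumes "i \<notin> Np" "eps i = -1"
  shows "m i = 1/2 \<Longrightarrow> s i = 1/2" and "m i = -1/2 \<Longrightarrow> s i = 3/2"
proof -
  obtain z :: int where z: "mu i = 1/2 + of_int z"
    using assms(2) cis_2pi_eq_cis_2piD[of "mu i" "1/2"] by (auto simp: cis.code complex_eq_iff)
  show "m i = 1/2 \<Longrightarrow> s i = 1/2" by (rule sval_eqI[OF assms(1), of _ "- z"]) (use z in auto)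
  show "m i = -1/2 \<Longrightarrow> s i = 3/2" by (rule sval_eqI[OF assms(1), of _ "1 - z"]) (use z in auto)
qed

lemma s_N_half_deg:
  "i \<in> Np \<Longrightarrow> m i = 1/2 \<Longrightarrow> s i = -1/2" "i \<in> Np \<Longrightarrow> m i = -1/2 \<Longrightarrow> s i = 1/2"
  "i \<in> Nm \<Longrightarrow> m i = 1/2 \<Longrightarrow> s i = 1/2" "i \<in> Nm \<Longrightarrow> m i = -1/2 \<Longrightarrow> s i = 3/2"
  using sval_Np[of i] s_half_sig[of i] half_deg_in_N_iff[of i] Np_Nm_disj by auto

abbreviation ne :: "'i vec \<Rightarrow> 'i vec \<Rightarrow> complex" where "ne a b \<equiv> frm B f (brk c a b)"

lemma ne_expand_left: "ne a b = (\<Sum>k\<in>UNIV. a k * ne (ub k) b)"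
proof -
  have "brk c a b = (\<lambda>k'. \<Sum>k\<in>UNIV. a k * brk c (ub k) b k')"
    using brk_expand_left[of c a b] by blast
  then show ?thesis by (simp add: frm_sum_right)
qed

lemma ne_expand_right: "ne a b = (\<Sum>k\<in>UNIV. b k * ne a (ub k))"
proof -
  have "brk c a b = (\<lambda>k'. \<Sum>k\<in>UNIV. b k * brk c a (ub k) k')"
    using brk_expand_right[of c a b] by blast
  then show ?thesis by (simp add: frm_sum_right)
qed

lemma ne_bilinear:
  "ne (vadd a b) d = ne a d + ne b d" "ne (vsc t a) d = t * ne a d"
  "ne d (vadd a b) = ne d a + ne d b" "ne d (vsc t a) = t * ne d a"
  by (simp_all add: brk_bilinear frm_bilinear)

lemma ne_ub_coords: "ne (ub i) (ub j) = f f_idx * (\<Sum>k\<in>UNIV. c i j k * B f_idx k)"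
  unfolding brk_ub_ub by (subst f_idx(2)) (simp add: frm_bilinear frm_ub_left)

lemma ne_ub_nonzero:
  assumes "ne (ub i) (ub j) \<noteq> 0"
  shows "m i + m j = 1 \<and> p i = p j \<and> eps i * eps j = 1 \<and>
    (\<forall>h\<in>supp_on H. wt c i h + wt c j h = theta h)"
proof -
  obtain k where "c i j k * B f_idx k \<noteq> 0"
    using assms ne_ub_coords by (auto elim: sum.not_neutral_contains_not_neutral)
  then have k: "c i j k \<noteq> 0" "B f_idx k \<noteq> 0" by auto
  note C = c_props[OF k(1)] and BB = B_props[OF k(2)]
  have "m k = 1" "\<not> p k" "eps k = 1" using BB m_f_idx p_f_idx eps_f_idx by auto
  moreover have "\<forall>h\<in>supp_on H. wt c k h = theta h"
    using BB wt_f_idx by (simp add: eq_neg_iff_add_eq_0[symmetric])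
  ultimately show ?thesis using C by auto
qed

lemma ne_ub_supersym: "ne (ub i) (ub j) = - psign (p i \<and> p j) * ne (ub j) (ub i)"
proof -
  have "(\<lambda>k. c i j k) = vsc (- psign (p i \<and> p j)) (\<lambda>k. c j i k)"
    unfolding vsc_def using c_antisym by blast
  then show ?thesis unfolding brk_ub_ub by (simp add: frm_bilinear)
qed

lemma ne_nondegenerate_half:
  assumes v: "v \<in> supp_on {i. m i = 1/2}" and ne0: "\<And>j. ne v (ub j) = 0"
  shows "v = vzero"
proof -
  have "frm B (brk c f v) b = 0" for b
    by (rule frm_eq_0_if_basis) (simp add: frm_invariant ne0)
  then have "brk c f v = vzero" by (rule frm_nondegenerate)
  with v show ?thesis by (rule brk_f_injective_half)
qed

lemma card_le_via_ne:
  assumes R: "\<And>i j. m i = 1/2 \<Longrightarrow> R i \<Longrightarrow> ne (ub i) (ub j) \<noteq> 0 \<Longrightarrow> R' j"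
  shows "card {i. m i = 1/2 \<and> R i} \<le> card {j. m j = 1/2 \<and> R' j}"
proof (rule card_le_if_injective[where M = "\<lambda>i j. ne (ub i) (ub j)"])
  fix i j assume "i \<in> {i. m i = 1/2 \<and> R i}" "ne (ub i) (ub j) \<noteq> 0"
  then show "j \<in> {j. m j = 1/2 \<and> R' j}" using R ne_ub_nonzero by fastforce
next
  fix v assume v: "v \<in> supp_on {i. m i = 1/2 \<and> R i}"
    and ker: "\<And>j. (\<Sum>i\<in>{i. m i = 1/2 \<and> R i}. v i * ne (ub i) (ub j)) = 0"
  have "ne v (ub j) = 0" for j
    using ker ne_expand_left[of v "ub j"] sum_supp_on[OF v] by simp
  moreover have "v \<in> supp_on {l. m l = 1/2}" by (rule supp_on_mono[OF v]) auto
  ultimately show "v = vzero" by (simp add: ne_nondegenerate_half)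
qed simp

subsection \<open>Maximal isotropic subspaces of g_1/2(sigma)\<close>

definition Ghalf :: "'i set" where "Ghalf = {i. m i = 1/2 \<and> eps i = -1}"

lemma Ghalf_eq: "{i. cis (2 * pi * mu i) = cis (pi * (2 * m i)) \<and> m i = 1/2} = Ghalf"
  unfolding Ghalf_def using cis_pi_half_deg by auto

lemma ne_ub_swap:
  assumes u: "u \<in> supp_on {k. p k = P}" and pj: "p j = P"
  shows "ne (ub j) u = - psign P * ne u (ub j)"
proof -
  have "u k * ne (ub j) (ub k) = - psign P * (u k * ne (ub k) (ub j))" for k
    using ne_ub_supersym[of j k] supp_on_nonzero[OF u, of k] pj by (cases "u k = 0") auto
  then show ?thesis
    by (simp add: ne_expand_right[of "ub j" u] ne_expand_left[of u "ub j"] sum_distrib_left)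
qed

lemma ne_ub_parity_mismatch:
  assumes u: "u \<in> supp_on {k. p k = P}" and pj: "p j \<noteq> P"
  shows "ne u (ub j) = 0" "ne (ub j) u = 0"
proof -
  have zero: "u k * ne (ub k) (ub j) = 0" "u k * ne (ub j) (ub k) = 0" for k
    using ne_ub_nonzero[of k j] ne_ub_nonzero[of j k] supp_on_nonzero[OF u, of k] pj by auto
  show "ne u (ub j) = 0" "ne (ub j) u = 0"
    by (simp_all add: ne_expand_left[of u "ub j"] ne_expand_right[of "ub j" u] zero)
qed

lemma ne_self_even:
  assumes u: "u \<in> supp_on {k. \<not> p k}"
  shows "ne u u = 0"
proof -
  have u': "u \<in> supp_on {k. p k = False}" using u by simp
  have swap: "u j * ne (ub j) u = - (u j * ne u (ub j))" for j
    using ne_ub_swap[OF u', of j] supp_on_nonzero[OF u, of j] by (cases "u j = 0") (auto simp: psign_def)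
  have "ne u u = (\<Sum>j\<in>UNIV. u j * ne (ub j) u)" by (rule ne_expand_left)
  also have "\<dots> = - (\<Sum>j\<in>UNIV. u j * ne u (ub j))" by (simp add: swap sum_negf)
  also have "(\<Sum>j\<in>UNIV. u j * ne u (ub j)) = ne u u" by (rule ne_expand_right[symmetric])
  finally have "ne u u = - ne u u" .
  then show ?thesis by simp
qed

lemma max_isotropic_not_extendable:
  assumes mi: "max_isotropic ne (supp_on Ghalf) (supp_on S)"
    and u: "u \<in> supp_on Ghalf" "u \<notin> supp_on S" and uu: "ne u u = 0"
    and uS: "\<And>j. j \<in> S \<Longrightarrow> ne u (ub j) = 0 \<and> ne (ub j) u = 0"
  shows False
proof -
  have sub: "subspace (supp_on S)" and SG: "supp_on S \<subseteq> supp_on Ghalf"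
    and iso: "\<forall>a\<in>supp_on S. \<forall>b\<in>supp_on S. ne a b = 0"
    and maximal: "\<And>W. subspace W \<and> supp_on S \<subseteq> W \<and> W \<subseteq> supp_on Ghalf \<and>
       (\<forall>a\<in>W. \<forall>b\<in>W. ne a b = 0) \<Longrightarrow> W = supp_on S"
    using mi unfolding max_isotropic_def by blast+
  have uw: "ne w u = 0" "ne u w = 0" if "w \<in> supp_on S" for w
    using uS sum_supp_on[OF that]
    by (simp_all add: ne_expand_left[of w u] ne_expand_right[of u w])
  define W where "W = {vadd w (vsc t u) |w t. w \<in> supp_on S}"
  have "subspace W" unfolding W_def using sub by (rule subspace_extend)
  moreover have "supp_on S \<subseteq> W"
  proof
    fix w assume "w \<in> supp_on S"
    moreover have "w = vadd w (vsc 0 u)" by (simp add: vadd_def vsc_def)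
    ultimately show "w \<in> W" unfolding W_def by blast
  qed
  moreover have "W \<subseteq> supp_on Ghalf"
    using SG u(1) unfolding W_def by (auto simp: supp_on_def vadd_def vsc_def)
  moreover have "\<forall>a\<in>W. \<forall>b\<in>W. ne a b = 0"
    unfolding W_def using iso uw uu by (auto simp: ne_bilinear)
  ultimately have "W = supp_on S" using maximal by blast
  moreover have "u = vadd vzero (vsc 1 u)" by (simp add: vadd_def vsc_def vzero_def)
  then have "u \<in> W" unfolding W_def using sub by (auto simp: subspace_def)
  ultimately show False using u(2) by simp
qed

lemma no_isotropic_kernel_vector:
  assumes mi: "max_isotropic ne (supp_on Ghalf) (supp_on S)"
    and u: "u \<in> supp_on ((Ghalf - S) \<inter> {i. p i = P})" "u \<noteq> vzero"
    and ker: "\<forall>j\<in>S \<inter> {i. p i = P}. (\<Sum>k\<in>(Ghalf - S) \<inter> {i. p i = P}. u k * ne (ub k) (ub j)) = 0"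
    and uu: "ne u u = 0"
  shows False
proof (rule max_isotropic_not_extendable[OF mi _ _ uu])
  show "u \<in> supp_on Ghalf" by (rule supp_on_mono[OF u(1)]) auto
  show "u \<notin> supp_on S"
  proof
    assume "u \<in> supp_on S"
    then have "u = vzero" using u(1) by (auto simp: supp_on_def vzero_def fun_eq_iff)
    with u(2) show False ..
  qed
  have uP: "u \<in> supp_on {i. p i = P}" by (rule supp_on_mono[OF u(1)]) auto
  fix j assume j: "j \<in> S"
  show "ne u (ub j) = 0 \<and> ne (ub j) u = 0"
  proof (cases "p j = P")
    case True
    have "ne u (ub j) = 0" using ker j True by (simp add: ne_expand_left[of u] sum_supp_on[OF u(1)])
    then show ?thesis using ne_ub_swap[OF uP True] by simp
  next
    case False
    then show ?thesis using ne_ub_parity_mismatch[OF uP] by blast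
  qed
qed

lemma max_isotropic_card_even:
  assumes mi: "max_isotropic ne (supp_on Ghalf) (supp_on S)"
  shows "card ((Ghalf - S) \<inter> {i. p i = False}) \<le> card (S \<inter> {i. p i = False})"
proof (rule ccontr)
  assume "\<not> ?thesis"
  then have "card (S \<inter> {i. p i = False}) < card ((Ghalf - S) \<inter> {i. p i = False})" by simp
  then obtain u where u: "u \<in> supp_on ((Ghalf - S) \<inter> {i. p i = False})" "u \<noteq> vzero"
    "\<forall>j\<in>S \<inter> {i. p i = False}. (\<Sum>k\<in>(Ghalf - S) \<inter> {i. p i = False}. u k * ne (ub k) (ub j)) = 0"
    by (rule exists_kernel_vector[OF finite, where M = "\<lambda>k j. ne (ub k) (ub j)"])
  have "ne u u = 0" by (rule ne_self_even, rule supp_on_mono[OF u(1)]) auto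
  with no_isotropic_kernel_vector[OF mi u] show False by blast
qed

text \<open>On the odd part the form is symmetric, so a two-dimensional kernel contains an
  isotropic vector: a root of a quadratic equation.\<close>
lemma max_isotropic_card_odd:
  assumes mi: "max_isotropic ne (supp_on Ghalf) (supp_on S)"
  shows "card ((Ghalf - S) \<inter> {i. p i = True}) \<le> card (S \<inter> {i. p i = True}) + 1"
proof (rule ccontr)
  let ?I = "(Ghalf - S) \<inter> {i. p i = True}" and ?J = "S \<inter> {i. p i = True}"
  assume "\<not> ?thesis"
  then have "card ?J + 2 \<le> card ?I" by simp
  then obtain u1 u2 k where u: "u1 \<in> supp_on ?I" "u2 \<in> supp_on ?I" "k \<in> ?I"
    "u1 k \<noteq> 0" "u2 k = 0" "u2 \<noteq> vzero"
    and ker1: "\<forall>j\<in>?J. (\<Sum>k\<in>?I. u1 k * ne (ub k) (ub j)) = 0"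
    and ker2: "\<forall>j\<in>?J. (\<Sum>k\<in>?I. u2 k * ne (ub k) (ub j)) = 0"
    by (rule exists_two_kernel_vectors[OF finite, where M = "\<lambda>k j. ne (ub k) (ub j)"])
  show False
  proof (cases "ne u1 u1 = 0")
    case True
    have "u1 \<noteq> vzero" using u(4) by (auto simp: vzero_def)
    with no_isotropic_kernel_vector[OF mi u(1) _ ker1 True] show False by blast
  next
    case False
    then obtain l where l: "ne u1 u1 * l\<^sup>2 + (ne u2 u1 + ne u1 u2) * l + ne u2 u2 = 0"
      by (rule complex_quadratic_has_root)
    let ?v = "vadd u2 (vsc l u1)"
    have "?v \<in> supp_on ?I" using u(1,2) by (auto simp: supp_on_def vadd_def vsc_def)
    moreover have "?v \<noteq> vzero"
    proof (cases "l = 0")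
      case True
      then show ?thesis using u(6) by (simp add: vadd_def vsc_def vzero_def)
    next
      case False
      then have "?v k \<noteq> 0" using u(4,5) by (simp add: vadd_def vsc_def)
      then show ?thesis by (auto simp: vzero_def)
    qed
    moreover have "\<forall>j\<in>?J. (\<Sum>k\<in>?I. ?v k * ne (ub k) (ub j)) = 0"
      using ker1 ker2 by (simp add: vadd_def vsc_def algebra_simps sum.distrib sum_distrib_left[symmetric])
    moreover have "ne ?v ?v = 0"
      using l by (simp add: ne_bilinear algebra_simps power2_eq_square)
    ultimately show False by (rule no_isotropic_kernel_vector[OF mi])
  qed
qed

lemma max_isotropic_card_le:
  assumes mi: "max_isotropic ne (supp_on Ghalf) (supp_on S)"
  shows "card (S \<inter> {i. p i = P}) \<le> card ((Ghalf - S) \<inter> {i. p i = P})"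
proof (rule card_le_if_injective[where M = "\<lambda>k j. ne (ub k) (ub j)"])
  have iso: "\<forall>a\<in>supp_on S. \<forall>b\<in>supp_on S. ne a b = 0"
    and SG: "S \<subseteq> Ghalf"
    using mi unfolding max_isotropic_def supp_on_subset_iff by blast+
  fix k j assume k: "k \<in> S \<inter> {i. p i = P}" and kj: "ne (ub k) (ub j) \<noteq> 0"
  have "j \<notin> S" using iso ub_in_supp_on[of k S] ub_in_supp_on[of j S] k kj by auto
  moreover have "eps k = -1" "m k = 1/2" using k SG by (auto simp: Ghalf_def)
  ultimately show "j \<in> (Ghalf - S) \<inter> {i. p i = P}"
    using ne_ub_nonzero[OF kj] k by (auto simp: Ghalf_def minus_equation_iff)
next
  have SG: "S \<subseteq> Ghalf" using mi unfolding max_isotropic_def supp_on_subset_iff by blast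
  fix v assume v: "v \<in> supp_on (S \<inter> {i. p i = P})"
    and ker: "\<And>j. (\<Sum>k\<in>S \<inter> {i. p i = P}. v k * ne (ub k) (ub j)) = 0"
  have "ne v (ub j) = 0" for j using ker[of j] by (simp add: ne_expand_left[of v] sum_supp_on[OF v])
  moreover have "v \<in> supp_on {i. m i = 1/2}" by (rule supp_on_mono[OF v]) (use SG in \<open>auto simp: Ghalf_def\<close>)
  ultimately show "v = vzero" by (simp add: ne_nondegenerate_half)
qed simp

lemma max_isotropic_card_parity:
  assumes "max_isotropic ne (supp_on Ghalf) (supp_on S)"
  shows "card ((Ghalf - S) \<inter> {i. p i = False}) = card (S \<inter> {i. p i = False})"
    and "card (S \<inter> {i. p i = True}) \<le> card ((Ghalf - S) \<inter> {i. p i = True})"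
    and "card ((Ghalf - S) \<inter> {i. p i = True}) \<le> card (S \<inter> {i. p i = True}) + 1"
  using max_isotropic_card_even[OF assms] max_isotropic_card_le[OF assms, of False]
    max_isotropic_card_le[OF assms, of True] max_isotropic_card_odd[OF assms] by simp_all

abbreviation Np_half :: "'i set" where "Np_half \<equiv> Np \<inter> {i. m i = 1/2}"
abbreviation Nm_half :: "'i set" where "Nm_half \<equiv> Nm \<inter> {i. m i = 1/2}"

lemma Ghalf_partition: "Ghalf = Np_half \<union> Nm_half" "Np_half \<inter> Nm_half = {}"
  using half_deg_in_N_iff Np_Nm_disj by (auto simp: Ghalf_def)

lemma Np_half_cards:
  "card (Nm_half \<inter> {i. p i = False}) = card (Np_half \<inter> {i. p i = False})"
  "card (Np_half \<inter> {i. p i = True}) \<le> card (Nm_half \<inter> {i. p i = True})"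
  "card (Nm_half \<inter> {i. p i = True}) \<le> card (Np_half \<inter> {i. p i = True}) + 1"
proof -
  have "Ghalf - Np_half = Nm_half" using Ghalf_partition by blast
  then show "card (Nm_half \<inter> {i. p i = False}) = card (Np_half \<inter> {i. p i = False})"
    "card (Np_half \<inter> {i. p i = True}) \<le> card (Nm_half \<inter> {i. p i = True})"
    "card (Nm_half \<inter> {i. p i = True}) \<le> card (Np_half \<inter> {i. p i = True}) + 1"
    using max_isotropic_card_parity[OF Np_half_max_isotropic[unfolded Ghalf_eq]] by simp_all
qed

lemma Nm_half_cards:
  "card ((Np_half \<union> Z0) \<inter> {i. p i = False}) = card ((Nm_half - Z0) \<inter> {i. p i = False})"
  "card ((Nm_half - Z0) \<inter> {i. p i = True}) \<le> card ((Np_half \<union> Z0) \<inter> {i. p i = True})"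
  "card ((Np_half \<union> Z0) \<inter> {i. p i = True}) \<le> card ((Nm_half - Z0) \<inter> {i. p i = True}) + 1"
proof -
  have "Ghalf - (Nm_half - Z0) = Np_half \<union> Z0" using Ghalf_partition Z0_sub by blast
  then show
    "card ((Np_half \<union> Z0) \<inter> {i. p i = False}) = card ((Nm_half - Z0) \<inter> {i. p i = False})"
    "card ((Nm_half - Z0) \<inter> {i. p i = True}) \<le> card ((Np_half \<union> Z0) \<inter> {i. p i = True})"
    "card ((Np_half \<union> Z0) \<inter> {i. p i = True}) \<le> card ((Nm_half - Z0) \<inter> {i. p i = True}) + 1"
    using max_isotropic_card_parity[OF Nm_half_max_isotropic[unfolded Ghalf_eq]] by simp_all
qed

lemma card_Nm_half_parity:
  "card (Nm_half \<inter> {i. p i = False}) = card (Np_half \<inter> {i. p i = False})"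
  "card (Nm_half \<inter> {i. p i = True}) = card (Np_half \<inter> {i. p i = True}) + card Z0"
proof -
  have Z0: "Z0 \<subseteq> Nm_half" "Z0 \<subseteq> Np_half \<union> Z0" and "Np_half \<union> Z0 - Z0 = Np_half"
    using Z0_sub Ghalf_partition(2) by blast+
  then have split: "card (Nm_half \<inter> {i. p i = P}) = card ((Nm_half - Z0) \<inter> {i. p i = P}) + card (Z0 \<inter> {i. p i = P})"
    "card ((Np_half \<union> Z0) \<inter> {i. p i = P}) = card (Np_half \<inter> {i. p i = P}) + card (Z0 \<inter> {i. p i = P})" for P
    using card_Int_split[OF Z0(1)] card_Int_split[OF Z0(2)] by simp_all
  have "Z0 - {i. p i = False} = Z0 \<inter> {i. p i = True}" by blast
  then have "card (Z0 \<inter> {i. p i = False}) + card (Z0 \<inter> {i. p i = True}) \<le> 1"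
    using card_Int_Diff[of Z0 "{i. p i = False}"] card_Z0 by simp
  with Np_half_cards Nm_half_cards show
    "card (Nm_half \<inter> {i. p i = False}) = card (Np_half \<inter> {i. p i = False})"
    "card (Nm_half \<inter> {i. p i = True}) = card (Np_half \<inter> {i. p i = True}) + card Z0"
    unfolding split using card_Int_Diff[of Z0 "{i. p i = False}"] \<open>Z0 - _ = _\<close> by simp_all
qed

lemma sdim_Nm_half_minus_sdim_Np_half:
  "(\<Sum>i\<in>Nm_half. psign (p i)) - (\<Sum>i\<in>Np_half. psign (p i)) = - of_nat (card Z0)"
  using card_Nm_half_parity by (simp add: sum_psign)

subsection \<open>The dual Coxeter number\<close>

lemma brk_ub_x: "brk c (ub k) x = vsc (- of_real (m k)) (ub k)"
proof
  fix l
  have "x j * c k j l = - (x j * c j k l)" for j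
    using c_antisym[of k j l] supp_H_even_deg0[OF x_in_H, of j] by (cases "x j = 0") (auto simp: psign_def)
  then have "brk c (ub k) x l = - brk c x (ub k) l" by (simp add: brk_ub_left brk_ub_right sum_negf)
  then show "brk c (ub k) x l = vsc (- of_real (m k)) (ub k) l" using grading by (simp add: vsc_def)
qed

lemma frm_casimir_x:
  "frm B (casimir c D x) x = (\<Sum>i\<in>UNIV. \<Sum>k\<in>UNIV. D i k * ((of_real (m k))\<^sup>2 * B i k))"
proof -
  have "frm B (brk c (ub i) (brk c (ub k) x)) x = (of_real (m k))\<^sup>2 * B i k" for i k
    by (simp add: frm_invariant brk_ub_x brk_bilinear frm_bilinear frm_ub_ub power2_eq_square)
  moreover have "frm B (casimir c D x) x =
      (\<Sum>i\<in>UNIV. \<Sum>k\<in>UNIV. D i k * frm B (brk c (ub i) (brk c (ub k) x)) x)"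
  proof -
    define W where "W i = (\<lambda>l. \<Sum>k\<in>UNIV. D i k * brk c (ub i) (brk c (ub k) x) l)" for i
    have "frm B (casimir c D x) x = (\<Sum>i\<in>UNIV. frm B (W i) x)"
      using frm_sum_left[of B "\<lambda>_. 1" W x] by (simp add: casimir_def W_def)
    then show ?thesis unfolding W_def by (simp add: frm_sum_left)
  qed
  ultimately show ?thesis by simp
qed

lemma hv_eq_supertrace: "hv = (\<Sum>i\<in>UNIV. psign (p i) * (of_real (m i))\<^sup>2)"
proof -
  obtain D where D: "dual_basis B D" "\<And>a. casimir c D a = vsc (2 * hv) a"
    using hvee unfolding dual_coxeter_def by blast
  have summand: "D i k * ((of_real (m k))\<^sup>2 * B i k) = psign (p i) * (of_real (m i))\<^sup>2 * (D i k * B k i)"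
    for i k
  proof (cases "B i k = 0")
    case True
    then show ?thesis using B_supersym[of k i] by simp
  next
    case False
    then have "m k = - m i" "B i k = psign (p i) * B k i"
      using B_props[OF False] B_supersym[of i k] by auto
    then show ?thesis by (simp add: power2_eq_square)
  qed
  have dual: "(\<Sum>k\<in>UNIV. D i k * B k i) = 1" for i
    using D(1) unfolding dual_basis_def by (metis frm_ub_right)
  have "frm B (casimir c D x) x =
      (\<Sum>i\<in>UNIV. psign (p i) * (of_real (m i))\<^sup>2 * (\<Sum>k\<in>UNIV. D i k * B k i))"
    by (simp add: frm_casimir_x summand sum_distrib_left)
  also have "\<dots> = (\<Sum>i\<in>UNIV. psign (p i) * (of_real (m i))\<^sup>2)" by (simp add: dual)
  finally have "frm B (casimir c D x) x = (\<Sum>i\<in>UNIV. psign (p i) * (of_real (m i))\<^sup>2)" .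
  moreover have "frm B (casimir c D x) x = hv"
    unfolding D(2) frm_bilinear theta_norm by simp
  ultimately show ?thesis by simp
qed

lemma sum_by_degree:
  "sum g X = sum g (X \<inter> {i. m i = 0}) + sum g (X \<inter> {i. m i = 1/2}) + sum g (X \<inter> {i. m i = -1/2})
     + sum g (X \<inter> {i. m i = 1}) + sum g (X \<inter> {i. m i = -1})"
proof -
  have "m ` X \<subseteq> {0, 1/2, -1/2, 1, -1}" using grading_vals by blast
  then have "sum g X = (\<Sum>d\<in>{0, 1/2, -1/2, 1, -1}. sum g {i\<in>X. m i = d})"
    by (intro sum.group[symmetric]) auto
  then show ?thesis by (simp add: Int_def conj_commute add.assoc)
qed

lemma sdim_minus_half_eq_sdim_half:
  "(\<Sum>k\<in>{k. m k = -1/2}. psign (p k)) = (\<Sum>i\<in>{i. m i = 1/2}. psign (p i))"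
proof (rule sum_eq_if_fiber_cards_eq[where kA = p and kB = p])
  fix P
  have "card {i. m i = 1/2 \<and> p i = P} \<le> card {k. m k = -1/2 \<and> p k = P}"
    by (rule card_le_via_brk_f) (use c_props p_f_idx in auto)
  moreover have "card {k. m k = -1/2 \<and> p k = P} \<le> card {i. m i = 1/2 \<and> p i = P}"
    by (rule card_le_via_brk_e) (use c_props p_e_idx in auto)
  ultimately show "card {k \<in> {k. m k = -1/2}. p k = P} = card {i \<in> {i. m i = 1/2}. p i = P}" by simp
qed simp_all

lemma hv_eq: "hv = 2 + (\<Sum>i\<in>{i. m i = 1/2}. psign (p i)) / 2"
proof -
  define T where "T i = psign (p i) * (of_real (m i))\<^sup>2" for i
  have deg: "sum T {i. m i = d} = (of_real d)\<^sup>2 * (\<Sum>i\<in>{i. m i = d}. psign (p i))" for d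
    by (simp add: T_def sum_distrib_left mult.commute)
  have "hv = sum T {i. m i = 0} + sum T {i. m i = 1/2} + sum T {i. m i = -1/2}
      + sum T {i. m i = 1} + sum T {i. m i = -1}"
    unfolding hv_eq_supertrace T_def[symmetric] sum_by_degree[of T UNIV] Int_UNIV_left ..
  also have "\<dots> = (\<Sum>i\<in>{i. m i = 1/2}. psign (p i)) / 2 + psign (p e_idx) + psign (p f_idx)"
    unfolding deg sdim_minus_half_eq_sdim_half by (simp add: e_idx(1) f_idx(1) power2_eq_square)
  finally show ?thesis using p_e_idx p_f_idx by (simp add: psign_def)
qed

text \<open>Outside g(sigma), ad f matches the basis of g_1/2 with that of g_-1/2, shifting
  weights by -theta and the numbers s_i by 1.\<close>
lemma sum_minus_half_nonsig:
  assumes h: "h \<in> supp_on H"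
  shows "(\<Sum>k\<in>{k. m k = -1/2 \<and> eps k \<noteq> -1}. psign (p k) * of_real (s k) * wt c k h) =
    (\<Sum>i\<in>{i. m i = 1/2 \<and> eps i \<noteq> -1}. psign (p i) * (of_real (s i) + 1) * (wt c i h - theta h))"
proof (rule sum_eq_if_fiber_cards_eq[where kA = "\<lambda>k. (p k, eps k, wt c k h + theta h)"
      and kB = "\<lambda>i. (p i, eps i, wt c i h)"])
  fix v :: "bool \<times> complex \<times> complex"
  obtain P e0 b where v: "v = (P, e0, b)" by (cases v) auto
  have "card {i. m i = 1/2 \<and> (eps i \<noteq> -1 \<and> p i = P \<and> eps i = e0 \<and> wt c i h = b)}
      \<le> card {k. m k = -1/2 \<and> (eps k \<noteq> -1 \<and> p k = P \<and> eps k = e0 \<and> wt c k h + theta h = b)}"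
  proof (rule card_le_via_brk_f)
    fix i k assume "m i = 1/2" "eps i \<noteq> -1 \<and> p i = P \<and> eps i = e0 \<and> wt c i h = b" "c f_idx i k \<noteq> 0"
    then show "eps k \<noteq> -1 \<and> p k = P \<and> eps k = e0 \<and> wt c k h + theta h = b"
      using c_props[of f_idx i k] p_f_idx eps_f_idx wt_f_idx[OF h] h by auto
  qed
  moreover have "card {k. m k = -1/2 \<and> (eps k \<noteq> -1 \<and> p k = P \<and> eps k = e0 \<and> wt c k h + theta h = b)}
      \<le> card {i. m i = 1/2 \<and> (eps i \<noteq> -1 \<and> p i = P \<and> eps i = e0 \<and> wt c i h = b)}"
  proof (rule card_le_via_brk_e)
    fix k i assume "m k = -1/2" "eps k \<noteq> -1 \<and> p k = P \<and> eps k = e0 \<and> wt c k h + theta h = b"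
      "c e_idx k i \<noteq> 0"
    then show "eps i \<noteq> -1 \<and> p i = P \<and> eps i = e0 \<and> wt c i h = b"
      using c_props[of e_idx k i] p_e_idx eps_e_idx wt_e_idx[OF h] h by (auto simp: algebra_simps)
  qed
  ultimately show "card {k \<in> {k. m k = -1/2 \<and> eps k \<noteq> -1}. (p k, eps k, wt c k h + theta h) = v} =
      card {i \<in> {i. m i = 1/2 \<and> eps i \<noteq> -1}. (p i, eps i, wt c i h) = v}"
    unfolding v by (simp add: conj_ac)
next
  fix k i assume k: "k \<in> {k. m k = -1/2 \<and> eps k \<noteq> -1}" and i: "i \<in> {i. m i = 1/2 \<and> eps i \<noteq> -1}"
    and ki: "(p k, eps k, wt c k h + theta h) = (p i, eps i, wt c i h)"
  have "i \<notin> Np" "k \<notin> Np" using i k half_deg_in_N_iff by auto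
  then have "s k = s i + 1" using s_shift[of i k] i k ki by auto
  moreover have "wt c k h = wt c i h - theta h" using ki by (simp add: algebra_simps)
  ultimately show "psign (p k) * of_real (s k) * wt c k h =
      psign (p i) * (of_real (s i) + 1) * (wt c i h - theta h)"
    using ki by simp
qed simp_all

text \<open>Outside g(sigma), the form (f | [a, b]) pairs u_i with a u_j of conjugate eigenvalue,
  and then s_j = - s_i.\<close>
lemma sum_s_half_nonsig: "(\<Sum>i\<in>{i. m i = 1/2 \<and> eps i \<noteq> -1}. psign (p i) * of_real (s i)) = 0"
proof -
  let ?S = "{i. m i = 1/2 \<and> eps i \<noteq> -1}"
  have conj: "eps j = cnj (eps i) \<and> p i = p j" if "ne (ub i) (ub j) \<noteq> 0" for i j
    using ne_ub_nonzero[OF that] eps_inverse by blast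
  have "(\<Sum>i\<in>?S. psign (p i) * of_real (s i)) = (\<Sum>j\<in>?S. - (psign (p j) * of_real (s j)))"
  proof (rule sum_eq_if_fiber_cards_eq[where kA = "\<lambda>i. (p i, eps i)" and kB = "\<lambda>j. (p j, cnj (eps j))"])
    fix v :: "bool \<times> complex"
    obtain P e0 where v: "v = (P, e0)" by (cases v) auto
    have "card {i. m i = 1/2 \<and> (eps i \<noteq> -1 \<and> p i = P \<and> eps i = e0)}
      \<le> card {j. m j = 1/2 \<and> (eps j \<noteq> -1 \<and> p j = P \<and> cnj (eps j) = e0)}"
      by (rule card_le_via_ne) (auto dest!: conj simp: cnj_eq_minus_one_iff eq_commute[of "-1"])
    moreover have "card {j. m j = 1/2 \<and> (eps j \<noteq> -1 \<and> p j = P \<and> cnj (eps j) = e0)}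
      \<le> card {i. m i = 1/2 \<and> (eps i \<noteq> -1 \<and> p i = P \<and> eps i = e0)}"
      by (rule card_le_via_ne) (auto dest!: conj simp: cnj_eq_minus_one_iff eq_commute[of "-1"])
    ultimately show "card {i \<in> ?S. (p i, eps i) = v} = card {j \<in> ?S. (p j, cnj (eps j)) = v}"
      unfolding v by (simp add: conj_ac)
  next
    fix i j assume i: "i \<in> ?S" and j: "j \<in> ?S" and ij: "(p i, eps i) = (p j, cnj (eps j))"
    have "i \<notin> Np" "j \<notin> Np" using i j half_deg_in_N_iff by auto
    then have "s j = - s i" using s_conj[of i j] i j ij by auto
    then show "psign (p i) * of_real (s i) = - (psign (p j) * of_real (s j))" using ij by simp
  qed simp_all
  then show ?thesis by (simp add: sum_negf)
qed

text \<open>The same pairing adds weights up to theta.\<close>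
lemma sum_wt_half:
  assumes h: "h \<in> supp_on H" and Q: "\<And>z. Q (cnj z) = Q z"
  shows "(\<Sum>i\<in>{i. m i = 1/2 \<and> Q (eps i)}. psign (p i) * wt c i h) =
    theta h / 2 * (\<Sum>i\<in>{i. m i = 1/2 \<and> Q (eps i)}. psign (p i))"
proof -
  let ?S = "{i. m i = 1/2 \<and> Q (eps i)}"
  have pair: "eps j = cnj (eps i) \<and> p i = p j \<and> wt c j h = theta h - wt c i h"
    if "ne (ub i) (ub j) \<noteq> 0" for i j
    using ne_ub_nonzero[OF that] eps_inverse h by (auto simp: algebra_simps)
  have "(\<Sum>i\<in>?S. psign (p i) * wt c i h) = (\<Sum>j\<in>?S. psign (p j) * (theta h - wt c j h))"
  proof (rule sum_eq_if_fiber_cards_eq[where kA = "\<lambda>i. (p i, eps i, wt c i h)"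
        and kB = "\<lambda>j. (p j, cnj (eps j), theta h - wt c j h)"])
    fix v :: "bool \<times> complex \<times> complex"
    obtain P e0 b where v: "v = (P, e0, b)" by (cases v) auto
    have "card {i. m i = 1/2 \<and> (Q (eps i) \<and> p i = P \<and> eps i = e0 \<and> wt c i h = b)}
      \<le> card {j. m j = 1/2 \<and> (Q (eps j) \<and> p j = P \<and> cnj (eps j) = e0 \<and> theta h - wt c j h = b)}"
      by (rule card_le_via_ne) (auto dest!: pair simp: Q)
    moreover have "card {j. m j = 1/2 \<and> (Q (eps j) \<and> p j = P \<and> cnj (eps j) = e0 \<and> theta h - wt c j h = b)}
      \<le> card {i. m i = 1/2 \<and> (Q (eps i) \<and> p i = P \<and> eps i = e0 \<and> wt c i h = b)}"
      by (rule card_le_via_ne) (auto dest!: pair simp: Q)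
    ultimately show "card {i \<in> ?S. (p i, eps i, wt c i h) = v} =
        card {j \<in> ?S. (p j, cnj (eps j), theta h - wt c j h) = v}"
      unfolding v by (simp add: conj_ac)
  qed auto
  also have "\<dots> = theta h * (\<Sum>j\<in>?S. psign (p j)) - (\<Sum>j\<in>?S. psign (p j) * wt c j h)"
    by (simp add: algebra_simps sum_subtractf sum_distrib_left)
  finally show ?thesis by (simp add: field_simps)
qed

lemma card_le_via_B:
  assumes XY: "X \<union> Y = Np \<union> Nm"
    and iso: "\<And>a b. a \<in> supp_on X \<Longrightarrow> b \<in> supp_on X \<Longrightarrow> frm B a b = 0"
    and g: "g = 1/2 \<or> g = -1/2"
    and R: "\<And>i j. i \<in> X \<Longrightarrow> R i \<Longrightarrow> B i j \<noteq> 0 \<Longrightarrow> R' j"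
  shows "card {i\<in>X. m i = g \<and> R i} \<le> card {j\<in>Y. m j = - g \<and> R' j}"
proof (rule card_le_if_injective[where M = B])
  fix i j assume i: "i \<in> {i\<in>X. m i = g \<and> R i}" and Bij: "B i j \<noteq> 0"
  have "j \<notin> X"
  proof
    assume "j \<in> X"
    then have "B i j = 0"
      using iso[OF ub_in_supp_on[of i X] ub_in_supp_on[of j X]] i by (simp add: frm_ub_ub)
    with Bij show False by simp
  qed
  moreover have mj: "m j = - g" using B_m[OF Bij] i by simp
  moreover have "eps i = -1" using half_deg_in_N_iff[of i] i g XY by auto
  then have "eps j = -1" using eps_B[OF Bij] by (simp add: minus_equation_iff)
  then have "j \<in> Np \<union> Nm" using half_deg_in_N_iff[of j] mj g by auto
  ultimately show "j \<in> {j\<in>Y. m j = - g \<and> R' j}" using XY R i Bij by auto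
next
  fix v assume v: "v \<in> supp_on {i\<in>X. m i = g \<and> R i}"
    and ker: "\<And>j. (\<Sum>i\<in>{i\<in>X. m i = g \<and> R i}. v i * B i j) = 0"
  have "frm B v b = 0" for b
    by (rule frm_eq_0_if_basis) (simp add: frm_ub_right sum_supp_on[OF v] ker)
  then show "v = vzero" by (rule frm_nondegenerate)
qed simp

text \<open>Inside g(sigma), the form pairs n_+ with n_- and negates weights.\<close>
lemma sum_wt_B_pairing:
  assumes h: "h \<in> supp_on H" and XY: "X \<union> Y = Np \<union> Nm"
    and isoX: "\<And>a b. a \<in> supp_on X \<Longrightarrow> b \<in> supp_on X \<Longrightarrow> frm B a b = 0"
    and isoY: "\<And>a b. a \<in> supp_on Y \<Longrightarrow> b \<in> supp_on Y \<Longrightarrow> frm B a b = 0"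
    and g: "g = 1/2 \<or> g = -1/2"
  shows "(\<Sum>i\<in>{i\<in>X. m i = g}. psign (p i) * wt c i h) = - (\<Sum>j\<in>{j\<in>Y. m j = - g}. psign (p j) * wt c j h)"
proof -
  have pair: "p i = p j \<and> wt c j h = - wt c i h" if "B i j \<noteq> 0" for i j
    using B_props[OF that] h by (auto simp: eq_neg_iff_add_eq_0 add.commute)
  have "(\<Sum>i\<in>{i\<in>X. m i = g}. psign (p i) * wt c i h) = (\<Sum>j\<in>{j\<in>Y. m j = - g}. - (psign (p j) * wt c j h))"
  proof (rule sum_eq_if_fiber_cards_eq[where kA = "\<lambda>i. (p i, wt c i h)" and kB = "\<lambda>j. (p j, - wt c j h)"])
    fix v :: "bool \<times> complex"
    obtain P b where v: "v = (P, b)" by (cases v) auto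
    have "card {i\<in>X. m i = g \<and> (p i = P \<and> wt c i h = b)} \<le> card {j\<in>Y. m j = - g \<and> (p j = P \<and> - wt c j h = b)}"
      by (rule card_le_via_B[OF XY isoX g]) (auto dest!: pair)
    moreover have "card {j\<in>Y. m j = - g \<and> (p j = P \<and> - wt c j h = b)} \<le> card {i\<in>X. m i = - (- g) \<and> (p i = P \<and> wt c i h = b)}"
    proof (rule card_le_via_B[OF _ isoY])
      show "Y \<union> X = Np \<union> Nm" "- g = 1/2 \<or> - g = -1/2" using XY g by auto
    qed (auto dest!: pair)
    ultimately show "card {i \<in> {i\<in>X. m i = g}. (p i, wt c i h) = v} = card {j \<in> {j\<in>Y. m j = - g}. (p j, - wt c j h) = v}"
      unfolding v by (simp add: conj_ac)
  qed auto
  then show ?thesis by (simp add: sum_negf)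
qed

lemma sum_half_deg_split:
  "sum g {i. m i = 1/2} = sum g {i. m i = 1/2 \<and> eps i \<noteq> -1} + sum g {i\<in>Np. m i = 1/2} + sum g {i\<in>Nm. m i = 1/2}"
  "sum g {i. m i = -1/2} = sum g {i. m i = -1/2 \<and> eps i \<noteq> -1} + sum g {i\<in>Np. m i = -1/2} + sum g {i\<in>Nm. m i = -1/2}"
proof -
  have "sum g {i. m i = d} = sum g {i. m i = d \<and> eps i \<noteq> -1} + sum g {i\<in>Np. m i = d} + sum g {i\<in>Nm. m i = d}"
    if d: "d = 1/2 \<or> d = -1/2" for d
  proof -
    have "{i. m i = d} = ({i. m i = d \<and> eps i \<noteq> -1} \<union> {i\<in>Np. m i = d}) \<union> {i\<in>Nm. m i = d}"
      using half_deg_in_N_iff d by auto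
    moreover have "{i. m i = d \<and> eps i \<noteq> -1} \<inter> {i\<in>Np. m i = d} = {}"
      "({i. m i = d \<and> eps i \<noteq> -1} \<union> {i\<in>Np. m i = d}) \<inter> {i\<in>Nm. m i = d} = {}"
      using half_deg_in_N_iff d Np_Nm_disj by auto
    ultimately show ?thesis by (simp add: sum.union_disjoint)
  qed
  then show "sum g {i. m i = 1/2} = sum g {i. m i = 1/2 \<and> eps i \<noteq> -1} + sum g {i\<in>Np. m i = 1/2} + sum g {i\<in>Nm. m i = 1/2}"
    "sum g {i. m i = -1/2} = sum g {i. m i = -1/2 \<and> eps i \<noteq> -1} + sum g {i\<in>Np. m i = -1/2} + sum g {i\<in>Nm. m i = -1/2}"
    by blast+
qed

lemma sum_Ghalf_split: "sum g Ghalf = sum g {i\<in>Np. m i = 1/2} + sum g {i\<in>Nm. m i = 1/2}"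
proof -
  have "{i\<in>Np. m i = 1/2} = Np \<inter> {i. m i = 1/2}" "{i\<in>Nm. m i = 1/2} = Nm \<inter> {i. m i = 1/2}" by auto
  then show ?thesis using Ghalf_partition by (simp add: sum.union_disjoint)
qed

definition gam_term :: "'i vec \<Rightarrow> 'i \<Rightarrow> complex" where
  "gam_term h i = psign (p i) * of_real (s i) * wt c i h"

lemma gam_eq_sum: "gam c p Np m mu A h = 1/2 * sum (gam_term h) A"
  by (simp add: gam_def gam_term_def)

lemma sum_gam_term_const_s:
  "(\<And>i. i \<in> A \<Longrightarrow> s i = r) \<Longrightarrow> sum (gam_term h) A = of_real r * (\<Sum>i\<in>A. psign (p i) * wt c i h)"
  by (simp add: gam_term_def sum_distrib_left mult_ac)

lemma sum_gam_term_nonsig: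
  assumes h: "h \<in> supp_on H"
  shows "sum (gam_term h) {k. m k = -1/2 \<and> eps k \<noteq> -1} - sum (gam_term h) {i. m i = 1/2 \<and> eps i \<noteq> -1}
    = - (theta h / 2) * (\<Sum>i\<in>{i. m i = 1/2 \<and> eps i \<noteq> -1}. psign (p i))"
proof -
  let ?A = "{i. m i = 1/2 \<and> eps i \<noteq> -1}"
  have "sum (gam_term h) {k. m k = -1/2 \<and> eps k \<noteq> -1} - sum (gam_term h) ?A =
      (\<Sum>i\<in>?A. psign (p i) * wt c i h) - theta h * (\<Sum>i\<in>?A. psign (p i))
      - theta h * (\<Sum>i\<in>?A. psign (p i) * of_real (s i))"
    unfolding gam_term_def sum_minus_half_nonsig[OF h]
    by (simp add: algebra_simps sum_subtractf[symmetric] sum_distrib_left)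
  then show ?thesis
    using sum_wt_half[OF h, of "\<lambda>z. z \<noteq> -1"] sum_s_half_nonsig cnj_eq_minus_one_iff by simp
qed

lemma sum_gam_term_sig:
  assumes h: "h \<in> supp_on H"
  shows "sum (gam_term h) {i\<in>Np. m i = -1/2} + sum (gam_term h) {i\<in>Nm. m i = -1/2}
    - sum (gam_term h) {i\<in>Np. m i = 1/2} - sum (gam_term h) {i\<in>Nm. m i = 1/2}
    = - (theta h / 2) * ((\<Sum>i\<in>{i\<in>Np. m i = 1/2}. psign (p i)) + (\<Sum>i\<in>{i\<in>Nm. m i = 1/2}. psign (p i)))"
proof -
  define Xp where "Xp = (\<Sum>i\<in>{i\<in>Np. m i = 1/2}. psign (p i) * wt c i h)"
  define Xm where "Xm = (\<Sum>i\<in>{i\<in>Nm. m i = 1/2}. psign (p i) * wt c i h)"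
  have G: "sum (gam_term h) {i\<in>Np. m i = -1/2} = of_real (1/2) * (\<Sum>i\<in>{i\<in>Np. m i = -1/2}. psign (p i) * wt c i h)"
    "sum (gam_term h) {i\<in>Nm. m i = -1/2} = of_real (3/2) * (\<Sum>i\<in>{i\<in>Nm. m i = -1/2}. psign (p i) * wt c i h)"
    "sum (gam_term h) {i\<in>Np. m i = 1/2} = of_real (-1/2) * Xp"
    "sum (gam_term h) {i\<in>Nm. m i = 1/2} = of_real (1/2) * Xm"
    unfolding Xp_def Xm_def by (rule sum_gam_term_const_s; simp add: s_N_half_deg)+
  have pairing: "(\<Sum>i\<in>{i\<in>Np. m i = -1/2}. psign (p i) * wt c i h) = - Xm"
    "(\<Sum>i\<in>{i\<in>Nm. m i = -1/2}. psign (p i) * wt c i h) = - Xp"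
    using sum_wt_B_pairing[where X = Np and Y = Nm and g = "-1/2", OF h _ Np_isotropic Nm_isotropic]
      sum_wt_B_pairing[where X = Nm and Y = Np and g = "-1/2", OF h _ Nm_isotropic Np_isotropic]
    unfolding Xp_def Xm_def by (simp_all add: Un_commute)
  have "Xp + Xm = theta h / 2 * ((\<Sum>i\<in>{i\<in>Np. m i = 1/2}. psign (p i)) + (\<Sum>i\<in>{i\<in>Nm. m i = 1/2}. psign (p i)))"
    using sum_wt_half[OF h, of "\<lambda>z. z = -1"] cnj_eq_minus_one_iff
    unfolding Xp_def Xm_def sum_Ghalf_split[symmetric] Ghalf_def by simp
  moreover have "sum (gam_term h) {i\<in>Np. m i = -1/2} + sum (gam_term h) {i\<in>Nm. m i = -1/2}
      - sum (gam_term h) {i\<in>Np. m i = 1/2} - sum (gam_term h) {i\<in>Nm. m i = 1/2} = - (Xp + Xm)"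
    unfolding G pairing by (simp add: field_simps)
  ultimately show ?thesis by simp
qed

lemma sum_gam_term_minus_half:
  assumes h: "h \<in> supp_on H"
  shows "sum (gam_term h) {i. m i = -1/2} - sum (gam_term h) {i. m i = 1/2}
    = - (theta h / 2) * (\<Sum>i\<in>{i. m i = 1/2}. psign (p i))"
  using sum_gam_term_nonsig[OF h] sum_gam_term_sig[OF h]
  unfolding sum_half_deg_split
  by (simp add: algebra_simps)

lemma gam_term_e_idx: "gam_term h e_idx = 0"
  by (simp add: gam_term_def s_e_idx)

lemma gam_term_f_idx: "h \<in> supp_on H \<Longrightarrow> gam_term h f_idx = - theta h"
  by (simp add: gam_term_def s_f_idx p_f_idx wt_f_idx psign_def)

lemma gam_decomposition:
  assumes h: "h \<in> supp_on H"
  shows "gam c p Np m mu (- H) h =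
    2 * gam c p Np m mu {i. i \<notin> H \<and> m i = 1/2} h + gam c p Np m mu {i. i \<notin> H \<and> m i = 0} h
    - (1/2) * (hv - 1) * (2 * frm B x h)"
proof -
  have sets: "- H \<inter> {i. m i = 0} = {i. i \<notin> H \<and> m i = 0}"
    "- H \<inter> {i. m i = 1/2} = {i. m i = 1/2}" "- H \<inter> {i. m i = -1/2} = {i. m i = -1/2}"
    "- H \<inter> {i. m i = 1} = {e_idx}" "- H \<inter> {i. m i = -1} = {f_idx}"
    "{i. i \<notin> H \<and> m i = 1/2} = {i. m i = 1/2}"
    using H_even_deg0 by (auto simp: e_idx(1)[symmetric] f_idx(1)[symmetric])
  have "gam c p Np m mu (- H) h = 1/2 * (sum (gam_term h) {i. i \<notin> H \<and> m i = 0}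
      + sum (gam_term h) {i. m i = 1/2} + sum (gam_term h) {i. m i = -1/2} - theta h)"
    unfolding gam_eq_sum sum_by_degree[of _ "- H"] sets
    by (simp add: gam_term_e_idx gam_term_f_idx[OF h])
  also have "sum (gam_term h) {i. m i = -1/2} =
      sum (gam_term h) {i. m i = 1/2} - theta h / 2 * (\<Sum>i\<in>{i. m i = 1/2}. psign (p i))"
    using sum_gam_term_minus_half[OF h] by (simp add: algebra_simps)
  also have "1/2 * (sum (gam_term h) {i. i \<notin> H \<and> m i = 0} + sum (gam_term h) {i. m i = 1/2}
      + (sum (gam_term h) {i. m i = 1/2} - theta h / 2 * (\<Sum>i\<in>{i. m i = 1/2}. psign (p i))) - theta h) =
    2 * (1/2 * sum (gam_term h) {i. m i = 1/2}) + 1/2 * sum (gam_term h) {i. i \<notin> H \<and> m i = 0}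
      - (1/2) * ((2 + (\<Sum>i\<in>{i. m i = 1/2}. psign (p i)) / 2) - 1) * theta h"
    by (simp add: field_simps)
  finally show ?thesis unfolding gam_eq_sum sets(6) hv_eq .
qed

lemma sum_s_half: "(\<Sum>i\<in>{i. m i = 1/2}. psign (p i) * of_real (s i)) = - of_nat (card Z0) / 2"
proof -
  have Np: "(\<Sum>i\<in>{i\<in>Np. m i = 1/2}. psign (p i) * of_real (s i)) =
      - 1/2 * (\<Sum>i\<in>Np \<inter> {i. m i = 1/2}. psign (p i))"
    unfolding sum_distrib_left by (rule sum.cong) (auto simp: s_N_half_deg)
  have Nm: "(\<Sum>i\<in>{i\<in>Nm. m i = 1/2}. psign (p i) * of_real (s i)) =
      1/2 * (\<Sum>i\<in>Nm \<inter> {i. m i = 1/2}. psign (p i))"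
    unfolding sum_distrib_left by (rule sum.cong) (auto simp: s_N_half_deg)
  have "(\<Sum>i\<in>{i. m i = 1/2}. psign (p i) * of_real (s i)) =
      1/2 * ((\<Sum>i\<in>Nm \<inter> {i. m i = 1/2}. psign (p i)) - (\<Sum>i\<in>Np \<inter> {i. m i = 1/2}. psign (p i)))"
    unfolding sum_half_deg_split(1) Np Nm sum_s_half_nonsig by (simp add: algebra_simps)
  then show ?thesis unfolding sdim_Nm_half_minus_sdim_Np_half by simp
qed

lemma gam_at_x: "2 * gam c p Np m mu (- H) x = 1 - hv - of_nat (card Z0) / 2"
proof -
  have half: "gam_term x i = 1/2 * (psign (p i) * of_real (s i))" if "i \<in> {i. m i = 1/2}" for i
  proof -
    from that have mi: "m i = 1/2" by simp
    show ?thesis unfolding gam_term_def wt_x mi by simp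
  qed
  have A: "{i. i \<notin> H \<and> m i = 1/2} = {i. m i = 1/2}" using H_even_deg0 by force
  have "sum (gam_term x) {i. m i = 1/2} = (\<Sum>i\<in>{i. m i = 1/2}. 1/2 * (psign (p i) * of_real (s i)))"
    by (rule sum.cong[OF refl]) (rule half)
  then have g_half: "gam c p Np m mu {i. i \<notin> H \<and> m i = 1/2} x = 1/4 * (- of_nat (card Z0) / 2)"
    unfolding gam_eq_sum A sum_s_half[symmetric] by (simp add: sum_divide_distrib[symmetric] mult.commute)
  have g_0: "gam c p Np m mu {i. i \<notin> H \<and> m i = 0} x = 0"
    by (simp add: gam_eq_sum gam_term_def wt_x)
  have "2 * gam c p Np m mu (- H) x = 2 * (2 * (1/4 * (- of_nat (card Z0) / 2)) + 0 - 1/2 * (hv - 1) * 1)"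
    unfolding gam_decomposition[OF x_in_H] g_half g_0 theta_norm by simp
  also have "\<dots> = 1 - hv - of_nat (card Z0) / 2" by (simp add: field_simps)
  finally show ?thesis .
qed

lemma gam_half_centralizer:
  assumes h: "h \<in> supp_on H" and hf: "brk c h f = vzero"
  shows "gam c p Np m mu {i. i \<notin> H \<and> m i = 1/2} h =
    1/2 * (gam c p Np m mu (- H) h - gam c p Np m mu {i. i \<notin> H \<and> m i = 0} h)"
proof -
  have "vsc (- theta h) f = vzero" using root_f[OF h] hf by simp
  then have "theta h = 0" using f_nonzero by (simp add: vsc_eq_vzero_iff)
  then show ?thesis using gam_decomposition[OF h] by simp
qed

end

theorem proposition4p2:
  fixes p :: "'i::finite \<Rightarrow> bool"
    and c :: "'i \<Rightarrow> 'i \<Rightarrow> 'i \<Rightarrow> complex"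
    and B :: "'i \<Rightarrow> 'i \<Rightarrow> complex"
    and hv :: complex
    and x e f :: "'i vec"
    and m mu :: "'i \<Rightarrow> real"
    and hC :: "'i vec set"
    and H Np Nm Z0 :: "'i set"
  assumes simple: "simple_lie_superalgebra p c"
    and form: "good_form p c B"
    and hvee: "dual_coxeter c B hv"
    \<comment> \<open>sl_2-triple and minimal grading by ad x (u_i in g_{m_i})\<close>
    and sl2: "brk c x e = e" "brk c x f = vsc (-1) f" "brk c e f = x"
    and ef_even: "e \<in> supp_on {i. \<not> p i}" "f \<in> supp_on {i. \<not> p i}" "e \<noteq> vzero"
    and grading: "\<forall>i. brk c x (ub i) = vsc (of_real (m i)) (ub i)"
    and grading_vals: "\<forall>i. m i \<in> {-1, -1/2, 0, 1/2, 1}"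
    and g1: "supp_on {i. m i = 1} = {vsc t e |t. True}"
    and gm1: "supp_on {i. m i = -1} = {vsc t f |t. True}"
    \<comment> \<open>Cartan subalgebra hC of the even part of g_0, sigma-invariant; x = theta/2 via the form,
        (theta|theta) = 2, e and f root vectors for theta and -theta\<close>
    and cartan: "cartan_sub c (supp_on {i. m i = 0 \<and> \<not> p i}) hC"
    and x_in: "x \<in> hC"
    and roots: "\<forall>h\<in>hC. brk c h e = vsc (2 * frm B x h) e"
               "\<forall>h\<in>hC. brk c h f = vsc (- (2 * frm B x h)) f"
    and theta_norm: "frm B x x = 1/2"
    \<comment> \<open>sigma: automorphism preserving the form, fixing x and f\<close>
    and sig_aut: "\<forall>a b. sig mu (brk c a b) = brk c (sig mu a) (sig mu b)"
    and sig_form: "\<forall>a b. frm B (sig mu a) (sig mu b) = frm B a b"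
    and sig_x: "sig mu x = x" and sig_f: "sig mu f = f"
    and hC_inv: "sig mu ` hC \<subseteq> hC"
    \<comment> \<open>basis of h^sigma, weight vectors\<close>
    and H_basis: "supp_on H = {a \<in> hC. sig mu a = a}"
    and weights: "\<forall>i. \<forall>h\<in>supp_on H. \<exists>t. brk c h (ub i) = vsc t (ub i)"
    \<comment> \<open>g(sigma) = n_- + h^sigma + n_+ (basis indices)\<close>
    and decomp: "{i. cis (2 * pi * mu i) = cis (pi * (2 * m i))} = Np \<union> H \<union> Nm"
    and disj: "Np \<inter> H = {}" "Nm \<inter> H = {}" "Np \<inter> Nm = {}"
    and nplus: "subalg c (supp_on Np)" "nilpotent_sub c (supp_on Np)"
               "\<forall>a\<in>supp_on Np. \<forall>b\<in>supp_on Np. frm B a b = 0"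
               "\<forall>h\<in>supp_on H. \<forall>a\<in>supp_on Np. brk c h a \<in> supp_on Np"
    and nminus: "subalg c (supp_on Nm)" "nilpotent_sub c (supp_on Nm)"
               "\<forall>a\<in>supp_on Nm. \<forall>b\<in>supp_on Nm. frm B a b = 0"
               "\<forall>h\<in>supp_on H. \<forall>a\<in>supp_on Nm. brk c h a \<in> supp_on Nm"
    and f_plus: "f \<in> supp_on Np"
    and iii: "max_isotropic (\<lambda>a b. frm B f (brk c a b))
                (supp_on {i. cis (2 * pi * mu i) = cis (pi * (2 * m i)) \<and> m i = 1/2})
                (supp_on (Np \<inter> {i. m i = 1/2}))"
    and iv: "Z0 \<subseteq> Nm \<inter> {i. m i = 1/2}" "card Z0 \<le> 1"
            "max_isotropic (\<lambda>a b. frm B f (brk c a b))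
                (supp_on {i. cis (2 * pi * mu i) = cis (pi * (2 * m i)) \<and> m i = 1/2})
                (supp_on (Nm \<inter> {i. m i = 1/2} - Z0))"
  shows "(2 * gam c p Np m mu (- H) x = 1 - hv - of_nat (card Z0) / 2) \<and>
          (\<forall>h\<in>supp_on H. gam c p Np m mu (- H) h =
            2 * gam c p Np m mu {i. i \<notin> H \<and> m i = 1/2} h + gam c p Np m mu {i. i \<notin> H \<and> m i = 0} h
            - (1/2) * (hv - 1) * (2 * frm B x h)) \<and>
          (\<forall>h\<in>{h \<in> supp_on H. brk c h f = vzero}.
            gam c p Np m mu {i. i \<notin> H \<and> m i = 1/2} h =
            (1/2) * (gam c p Np m mu (- H) h - gam c p Np m mu {i. i \<notin> H \<and> m i = 0} h))"
proof -
  have H_hC: "supp_on H \<subseteq> hC" using H_basis by auto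
  have hC_deg0: "hC \<subseteq> supp_on {i. m i = 0 \<and> \<not> p i}" using cartan by (simp add: cartan_sub_def)
  have H_deg0: "H \<subseteq> {i. m i = 0 \<and> \<not> p i}"
    using subset_trans[OF H_hC hC_deg0] by (simp only: supp_on_subset_iff)
  interpret twisted_minimal_grading p c B hv x e f m mu H Np Nm Z0
  proof
    show "lie_superalgebra p c" using simple by (simp add: simple_lie_superalgebra_def)
    show "m i = 0 \<and> \<not> p i" if "i \<in> H" for i using H_deg0 that by blast
    show "x \<in> supp_on H" using H_basis x_in sig_x by simp
    show "brk c h e = vsc (2 * frm B x h) e" "brk c h f = vsc (- (2 * frm B x h)) f"
      if "h \<in> supp_on H" for h
      using roots subsetD[OF H_hC that] by simp_all
  qed (use assms in simp_all)
  show ?thesis using gam_at_x gam_decomposition gam_half_centralizer by simp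
qed

end
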